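(* Fix a psi-calculus with inputs of the form $\underline{M}(x).P$ (no pattern matching). A ternary relation $\mathcal R$ between assertions and pairs of agents is a (late-semantics) bisimulation in the sense defined below if and only if it is an early-semantics bisimulation in the sense defined below.
   Context: Names, nominal sets, support $\mathrm n(X)$, freshness $a\#X$, equivariance and substitution $X[\tilde a:=\tilde Y]$ are as usual in nominal logic. A psi-calculus is given by nominal data types ${\rm T}$ (terms), ${\rm C}$ (conditions), ${\rm A}$ (assertions), equivariant $\leftrightarrow:{\rm T}\times{\rm T}\to{\rm C}$, $\otimes:{\rm A}\times{\rm A}\to{\rm A}$, $\mathbf 1\in{\rm A}$, $\vdash\subseteq{\rm A}\times{\rm C}$, with $\Psi\simeq\Psi'$ iff they entail the same conditions, satisfying: $\leftrightarrow$ symmetric and transitive under every $\Psi$; weakening $\Psi\vdash\varphi\Rightarrow\Psi\otimes\Psi'\vdash\varphi$; $\Psi\simeq\Psi'\Rightarrow\Psi\otimes\Psi''\simeq\Psi'\otimes\Psi''$; $\Psi\otimes\mathbf 1\simeq\Psi$; associativity and commutativity of $\otimes$ up to $\simeq$. Frames $(\nu\tilde b)\Psi$ (names $\tilde b$ bound in $\Psi$), with composition $(\nu\tilde b_1)\Psi_1\otimes(\nu\tilde b_2)\Psi_2=(\nu\tilde b_1\tilde b_2)(\Psi_1\otimes\Psi_2)$ (bound names chosen fresh); $F\vdash\varphi$ iff some alpha-variant $(\nu\tilde b)\Psi$ of $F$ has $\tilde b\#\varphi$ and $\Psi\vdash\varphi$; $F\simeq G$ iff $\forall\varphi.\ F\vdash\varphi\Leftrightarrow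 G\vdash\varphi$. Agents: $\overline MN.P$, $\underline M(x).P$, $\mathbf{case}\ \varphi_1:P_1[]\cdots[]\varphi_n:P_n$, $(\nu a)P$, $P\mid Q$, $!P$ (no unguarded assertions in $P$), $(\!|\Psi|\!)$; frame $\mathcal F(P)$: $\mathbf 1$ for prefixes, case and replication, $\Psi$ for $(\!|\Psi|\!)$, $\mathcal F(P)\otimes\mathcal F(Q)$ for $P\mid Q$, $(\nu b)\mathcal F(P)$ for $(\nu b)P$. Late semantics $\Psi\rhd P\xrightarrow{\alpha}P'$ with actions $\overline M(\nu\tilde a)N$, $\underline M(x)$, $\tau$: In: $\Psi\vdash M\leftrightarrow K\Rightarrow\Psi\rhd\underline M(x).P\xrightarrow{\underline K(x)}P$; Out: $\Psi\vdash M\leftrightarrow K\Rightarrow\Psi\rhd\overline MN.P\xrightarrow{\overline KN}P$; Case: $\Psi\rhd P_i\xrightarrow{\alpha}P'$, $\Psi\vdash\varphi_i\Rightarrow\Psi\rhd\mathbf{case}\,\tilde\varphi:\tilde P\xrightarrow{\alpha}P'$; Com: with $\mathcal F(P)=(\nu\tilde b_P)\Psi_P$, $\mathcal F(Q)=(\nu\tilde b_Q)\Psi_Q$ suitably fresh, $\Psi_Q\otimes\Psi\rhd P\xrightarrow{\overline M(\nu\tilde a)N}P'$, $\Psi_P\otimes\Psi\rhd Q\xrightarrow{\underline K(x)}Q'$, $\Psi\otimes\Psi_P\otimes\Psi_Q\vdash M\leftrightarrow K$, $\tilde a\#Q$ $\Rightarrow$ $\Psi\rhd P\mid Q\xrightarrow{\tau}(\nu\tilde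 a)(P'\mid Q'[x:=N])$ (and symmetric); Par: $\Psi_Q\otimes\Psi\rhd P\xrightarrow{\alpha}P'$, $\mathrm{bn}(\alpha)\#Q$ ($\tilde b_Q\#\Psi,P,\alpha$) $\Rightarrow\Psi\rhd P\mid Q\xrightarrow{\alpha}P'\mid Q$ (and symmetric); Scope: $b\#\alpha,\Psi$; Open: $\Psi\rhd P\xrightarrow{\overline M(\nu\tilde a)N}P'$, $b\#\tilde a,\Psi,M$, $b\in\mathrm n(N)\Rightarrow\Psi\rhd(\nu b)P\xrightarrow{\overline M(\nu\tilde a\cup\{b\})N}P'$; Rep: $\Psi\rhd P\mid !P\xrightarrow{\alpha}P'\Rightarrow\Psi\rhd !P\xrightarrow{\alpha}P'$. Here $\mathrm{bn}(\overline M(\nu\tilde a)N)=\tilde a$, $\mathrm{bn}(\underline M(x))=\{x\}$, $\mathrm{bn}(\tau)=\emptyset$; transitions are identified up to alpha-conversion of bound names. The early semantics is the same except In gives $\Psi\rhd\underline M(x).P\xrightarrow{\underline KN}P[x:=N]$ for all $N$, and Com uses $\Psi_P\otimes\Psi\rhd Q\xrightarrow{\underline KN}Q'$ yielding $(\nu\tilde a)(P'\mid Q')$. (Late-semantics) bisimulation: a ternary relation $\mathcal R$ such that $\mathcal R(\Psi,P,Q)$ implies (1) $\Psi\otimes\mathcal F(P)\simeq\Psi\otimes\mathcal F(Q)$; (2) $\mathcal R(\Psi,Q,P)$; (3) $\mathcal R(\Psi\otimes\Psi',P,Q)$ for all $\Psi'$; (4) for all $\alpha,P'$ with $\mathrm{bn}(\alpha)\#\Psi,Q$: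 (a) if $\alpha=\underline M(x)$ and $\Psi\rhd P\xrightarrow{\alpha}P'$ (late) then for all $L$ there is $Q'$ with $\Psi\rhd Q\xrightarrow{\alpha}Q'$ (late) and $\mathcal R(\Psi,P'[x:=L],Q'[x:=L])$; (b) otherwise, $\Psi\rhd P\xrightarrow{\alpha}P'$ (late) implies some $Q'$ with $\Psi\rhd Q\xrightarrow{\alpha}Q'$ (late) and $\mathcal R(\Psi,P',Q')$. Early-semantics bisimulation: the same conditions (1)–(3), and (4') for all early actions $\alpha$ (outputs, $\underline MN$, $\tau$) and $P'$ with $\mathrm{bn}(\alpha)\#\Psi,Q$: $\Psi\rhd P\xrightarrow{\alpha}P'$ (early) implies there is $Q'$ with $\Psi\rhd Q\xrightarrow{\alpha}Q'$ (early) and $\mathcal R(\Psi,P',Q')$. *)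

theory Defs
  imports Main
begin

type_synonym name = nat

definition swap_name :: "name \<Rightarrow> name \<Rightarrow> name \<Rightarrow> name" where
  "swap_name a b c = (if c = a then b else if c = b then a else c)"

text \<open>Types carrying a name-swapping action (the nominal-set axioms are
  imposed separately, in the psi-calculus predicate, for the parameter types).\<close>
class pt =
  fixes swp :: "name \<Rightarrow> name \<Rightarrow> 'a \<Rightarrow> 'a"

instantiation nat :: pt begin
definition "swp a b (c::nat) = swap_name a b c"
instance ..
end

instantiation list :: (pt) pt begin
definition "swp a b (xs::'a list) = map (swp a b) xs"
instance ..
end

instantiation prod :: (pt, pt) pt begin
definition "swp a b (p::'a \<times> 'b) = (swp a b (fst p), swp a b (snd p))"
instance ..
end

definition supp :: "'x::pt \<Rightarrow> name set" where
  "supp x = {a. infinite {b. swp a b x \<noteq> x}}"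

definition fresh :: "name \<Rightarrow> 'x::pt \<Rightarrow> bool" where
  "fresh a x \<longleftrightarrow> a \<notin> supp x"

definition fresh_star :: "name set \<Rightarrow> 'x::pt \<Rightarrow> bool" where
  "fresh_star A x \<longleftrightarrow> (\<forall>a\<in>A. fresh a x)"

definition nominal_type :: "'x::pt itself \<Rightarrow> bool" where
  "nominal_type _ \<longleftrightarrow>
     (\<forall>a (x::'x). swp a a x = x) \<and>
     (\<forall>a b (x::'x). swp a b (swp a b x) = x) \<and>
     (\<forall>a b c d (x::'x). swp a b (swp c d x) = swp (swap_name a b c) (swap_name a b d) (swp a b x)) \<and>
     (\<forall>x::'x. finite (supp x))"

text \<open>Permutation (b1 a1)...(bn an) given by a list of pairs.\<close>
definition perm_swaps :: "(name \<times> name) list \<Rightarrow> 'x::pt \<Rightarrow> 'x" where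
  "perm_swaps ps x = foldr (\<lambda>(b, a) y. swp b a y) ps x"

record ('t, 'c, 'a) psi =
  chan_eq :: "'t \<Rightarrow> 't \<Rightarrow> 'c"
  acomp :: "'a \<Rightarrow> 'a \<Rightarrow> 'a"
  aunit :: 'a
  entails :: "'a \<Rightarrow> 'c \<Rightarrow> bool"
  subT :: "'t \<Rightarrow> name list \<Rightarrow> 't list \<Rightarrow> 't"
  subC :: "'c \<Rightarrow> name list \<Rightarrow> 't list \<Rightarrow> 'c"
  subA :: "'a \<Rightarrow> name list \<Rightarrow> 't list \<Rightarrow> 'a"

text \<open>Standard requirements on a substitution function X[xs:=Ts]
  (defined for distinct xs of the same length as Ts).\<close>
definition subst_ok :: "('x::pt \<Rightarrow> name list \<Rightarrow> 't::pt list \<Rightarrow> 'x) \<Rightarrow> bool" where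
  "subst_ok sb \<longleftrightarrow>
     (\<forall>a b X xs Ts. swp a b (sb X xs Ts) = sb (swp a b X) (swp a b xs) (swp a b Ts)) \<and>
     (\<forall>X xs Ts b. distinct xs \<and> length xs = length Ts \<and> set xs \<subseteq> supp X \<and> b \<in> supp Ts
         \<longrightarrow> b \<in> supp (sb X xs Ts)) \<and>
     (\<forall>X xs bs Ts. distinct xs \<and> distinct bs \<and> length xs = length Ts \<and> length bs = length xs \<and>
         fresh_star (set bs) X \<and> set bs \<inter> set xs = {}
         \<longrightarrow> sb X xs Ts = sb (perm_swaps (zip bs xs) X) bs Ts) \<and>
     (\<forall>X xs Ts. distinct xs \<and> length xs = length Ts \<and> fresh_star (set xs) X \<longrightarrow> sb X xs Ts = X)"

definition aequiv :: "('t, 'c, 'a) psi \<Rightarrow> 'a \<Rightarrow> 'a \<Rightarrow> bool" where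
  "aequiv S \<Psi> \<Psi>' \<longleftrightarrow> (\<forall>\<phi>. entails S \<Psi> \<phi> \<longleftrightarrow> entails S \<Psi>' \<phi>)"

definition psi_calculus :: "('t::pt, 'c::pt, 'a::pt) psi \<Rightarrow> bool" where
  "psi_calculus S \<longleftrightarrow>
     nominal_type TYPE('t) \<and> nominal_type TYPE('c) \<and> nominal_type TYPE('a) \<and>
     \<comment> \<open>equivariance\<close>
     (\<forall>a b M N. swp a b (chan_eq S M N) = chan_eq S (swp a b M) (swp a b N)) \<and>
     (\<forall>a b \<Psi> \<Psi>'. swp a b (acomp S \<Psi> \<Psi>') = acomp S (swp a b \<Psi>) (swp a b \<Psi>')) \<and>
     (\<forall>a b. swp a b (aunit S) = aunit S) \<and>
     (\<forall>a b \<Psi> \<phi>. entails S \<Psi> \<phi> \<longrightarrow> entails S (swp a b \<Psi>) (swp a b \<phi>)) \<and>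
     subst_ok (subT S) \<and> subst_ok (subC S) \<and> subst_ok (subA S) \<and>
     \<comment> \<open>channel equivalence symmetric and transitive\<close>
     (\<forall>\<Psi> M N. entails S \<Psi> (chan_eq S M N) \<longrightarrow> entails S \<Psi> (chan_eq S N M)) \<and>
     (\<forall>\<Psi> M N L. entails S \<Psi> (chan_eq S M N) \<and> entails S \<Psi> (chan_eq S N L)
        \<longrightarrow> entails S \<Psi> (chan_eq S M L)) \<and>
     \<comment> \<open>weakening\<close>
     (\<forall>\<Psi> \<Psi>' \<phi>. entails S \<Psi> \<phi> \<longrightarrow> entails S (acomp S \<Psi> \<Psi>') \<phi>) \<and>
     \<comment> \<open>compositionality, identity, associativity, commutativity\<close>
     (\<forall>\<Psi> \<Psi>' \<Psi>''. aequiv S \<Psi> \<Psi>' \<longrightarrow> aequiv S (acomp S \<Psi> \<Psi>'') (acomp S \<Psi>' \<Psi>'')) \<and>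
     (\<forall>\<Psi>. aequiv S (acomp S \<Psi> (aunit S)) \<Psi>) \<and>
     (\<forall>\<Psi> \<Psi>' \<Psi>''. aequiv S (acomp S (acomp S \<Psi> \<Psi>') \<Psi>'') (acomp S \<Psi> (acomp S \<Psi>' \<Psi>''))) \<and>
     (\<forall>\<Psi> \<Psi>'. aequiv S (acomp S \<Psi> \<Psi>') (acomp S \<Psi>' \<Psi>))"

datatype ('t, 'c, 'a) ragent =
    ROut 't 't "('t, 'c, 'a) ragent"
  | RIn 't name "('t, 'c, 'a) ragent"
  | RCase "('c \<times> ('t, 'c, 'a) ragent) list"
  | RRes name "('t, 'c, 'a) ragent"
  | RPar "('t, 'c, 'a) ragent" "('t, 'c, 'a) ragent"
  | RBang "('t, 'c, 'a) ragent"
  | RAss 'a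

primrec rswp :: "name \<Rightarrow> name \<Rightarrow> ('t::pt, 'c::pt, 'a::pt) ragent \<Rightarrow> ('t, 'c, 'a) ragent" where
  "rswp a b (ROut M N P) = ROut (swp a b M) (swp a b N) (rswp a b P)"
| "rswp a b (RIn M x P) = RIn (swp a b M) (swap_name a b x) (rswp a b P)"
| "rswp a b (RCase cs) = RCase (map (map_prod (swp a b) (rswp a b)) cs)"
| "rswp a b (RRes x P) = RRes (swap_name a b x) (rswp a b P)"
| "rswp a b (RPar P Q) = RPar (rswp a b P) (rswp a b Q)"
| "rswp a b (RBang P) = RBang (rswp a b P)"
| "rswp a b (RAss \<Psi>) = RAss (swp a b \<Psi>)"

instantiation ragent :: (pt, pt, pt) pt begin
definition "swp a b (P::('a,'b,'c) ragent) = rswp a b P"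
instance ..
end

inductive ralpha :: "('t::pt, 'c::pt, 'a::pt) ragent \<Rightarrow> ('t, 'c, 'a) ragent \<Rightarrow> bool" where
  al_refl: "ralpha P P"
| al_sym: "ralpha P Q \<Longrightarrow> ralpha Q P"
| al_trans: "ralpha P Q \<Longrightarrow> ralpha Q R \<Longrightarrow> ralpha P R"
| al_res: "fresh b P \<Longrightarrow> ralpha (RRes a P) (RRes b (swp a b P))"
| al_in: "fresh b P \<Longrightarrow> ralpha (RIn M a P) (RIn M b (swp a b P))"
| al_cout: "ralpha P Q \<Longrightarrow> ralpha (ROut M N P) (ROut M N Q)"
| al_cin: "ralpha P Q \<Longrightarrow> ralpha (RIn M x P) (RIn M x Q)"
| al_ccase: "ralpha P Q \<Longrightarrow> ralpha (RCase (xs @ (\<phi>, P) # ys)) (RCase (xs @ (\<phi>, Q) # ys))"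
| al_cres: "ralpha P Q \<Longrightarrow> ralpha (RRes x P) (RRes x Q)"
| al_cpar1: "ralpha P Q \<Longrightarrow> ralpha (RPar P R) (RPar Q R)"
| al_cpar2: "ralpha P Q \<Longrightarrow> ralpha (RPar R P) (RPar R Q)"
| al_cbang: "ralpha P Q \<Longrightarrow> ralpha (RBang P) (RBang Q)"

quotient_type (overloaded) ('t, 'c, 'a) agent = "('t::pt, 'c::pt, 'a::pt) ragent" / ralpha
  by (rule equivpI) (auto simp: reflp_def symp_def transp_def intro: ralpha.intros)

definition Out :: "'t \<Rightarrow> 't \<Rightarrow> ('t::pt, 'c::pt, 'a::pt) agent \<Rightarrow> ('t, 'c, 'a) agent" where
  "Out M N P = abs_agent (ROut M N (rep_agent P))"
definition In :: "'t \<Rightarrow> name \<Rightarrow> ('t::pt, 'c::pt, 'a::pt) agent \<Rightarrow> ('t, 'c, 'a) agent" where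
  "In M x P = abs_agent (RIn M x (rep_agent P))"
definition Case :: "('c \<times> ('t::pt, 'c::pt, 'a::pt) agent) list \<Rightarrow> ('t, 'c, 'a) agent" where
  "Case cs = abs_agent (RCase (map (map_prod id rep_agent) cs))"
definition Res :: "name \<Rightarrow> ('t::pt, 'c::pt, 'a::pt) agent \<Rightarrow> ('t, 'c, 'a) agent" where
  "Res x P = abs_agent (RRes x (rep_agent P))"
definition Par :: "('t::pt, 'c::pt, 'a::pt) agent \<Rightarrow> ('t, 'c, 'a) agent \<Rightarrow> ('t, 'c, 'a) agent" where
  "Par P Q = abs_agent (RPar (rep_agent P) (rep_agent Q))"
definition Bang :: "('t::pt, 'c::pt, 'a::pt) agent \<Rightarrow> ('t, 'c, 'a) agent" where
  "Bang P = abs_agent (RBang (rep_agent P))"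
definition Ass :: "'a \<Rightarrow> ('t::pt, 'c::pt, 'a::pt) agent" where
  "Ass \<Psi> = abs_agent (RAss \<Psi>)"

instantiation agent :: (pt, pt, pt) pt begin
definition "swp a b (P::('a,'b,'c) agent) = abs_agent (swp a b (rep_agent P))"
instance ..
end

primrec resl :: "name list \<Rightarrow> ('t::pt, 'c::pt, 'a::pt) agent \<Rightarrow> ('t, 'c, 'a) agent" where
  "resl [] P = P"
| "resl (a # as) P = Res a (resl as P)"

text \<open>Well-formedness: replicated agents contain no unguarded assertions
  (an assertion is guarded when it occurs under an input or output prefix).\<close>
primrec rnoass :: "('t, 'c, 'a) ragent \<Rightarrow> bool" where
  "rnoass (ROut M N P) = True"
| "rnoass (RIn M x P) = True"
| "rnoass (RCase cs) = list_all snd (map (map_prod id rnoass) cs)"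
| "rnoass (RRes x P) = rnoass P"
| "rnoass (RPar P Q) = (rnoass P \<and> rnoass Q)"
| "rnoass (RBang P) = rnoass P"
| "rnoass (RAss \<Psi>) = False"

primrec rwf :: "('t, 'c, 'a) ragent \<Rightarrow> bool" where
  "rwf (ROut M N P) = rwf P"
| "rwf (RIn M x P) = rwf P"
| "rwf (RCase cs) = list_all snd (map (map_prod id rwf) cs)"
| "rwf (RRes x P) = rwf P"
| "rwf (RPar P Q) = (rwf P \<and> rwf Q)"
| "rwf (RBang P) = (rnoass P \<and> rwf P)"
| "rwf (RAss \<Psi>) = True"

definition wf_agent :: "('t::pt, 'c::pt, 'a::pt) agent \<Rightarrow> bool" where
  "wf_agent P \<longleftrightarrow> rwf (rep_agent P)"

text \<open>rframe S r bs \<Psi>: the raw agent r has frame (\<nu>bs)\<Psi>, where bound names of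
  the frames of parallel components are kept apart (capture avoidance).\<close>
inductive rframe :: "('t::pt, 'c::pt, 'a::pt) psi \<Rightarrow> ('t, 'c, 'a) ragent \<Rightarrow> name list \<Rightarrow> 'a \<Rightarrow> bool"
  for S where
  "rframe S (ROut M N P) [] (aunit S)"
| "rframe S (RIn M x P) [] (aunit S)"
| "rframe S (RCase cs) [] (aunit S)"
| "rframe S (RBang P) [] (aunit S)"
| "rframe S (RAss \<Psi>) [] \<Psi>"
| "rframe S P bs \<Psi> \<Longrightarrow> rframe S (RRes x P) (x # bs) \<Psi>"
| "rframe S P bs1 \<Psi>1 \<Longrightarrow> rframe S Q bs2 \<Psi>2 \<Longrightarrow> fresh_star (set bs1) Q \<Longrightarrow>
   fresh_star (set bs2) P \<Longrightarrow> set bs1 \<inter> set bs2 = {} \<Longrightarrow>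
   rframe S (RPar P Q) (bs1 @ bs2) (acomp S \<Psi>1 \<Psi>2)"

text \<open>frame_of S P bs \<Psi>: (\<nu>bs)\<Psi> is an alpha-variant of the frame F(P).\<close>
definition frame_of :: "('t::pt, 'c::pt, 'a::pt) psi \<Rightarrow> ('t, 'c, 'a) agent \<Rightarrow> name list \<Rightarrow> 'a \<Rightarrow> bool" where
  "frame_of S P bs \<Psi> \<longleftrightarrow> (\<exists>r. abs_agent r = P \<and> rframe S r bs \<Psi>)"

definition frame_ent :: "('t::pt, 'c::pt, 'a::pt) psi \<Rightarrow> 'a \<Rightarrow> ('t, 'c, 'a) agent \<Rightarrow> 'c \<Rightarrow> bool" where
  "frame_ent S \<Psi> P \<phi> \<longleftrightarrow>
     (\<exists>bs \<Psi>P. frame_of S P bs \<Psi>P \<and> fresh_star (set bs) \<Psi> \<and> fresh_star (set bs) \<phi> \<and>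
        entails S (acomp S \<Psi> \<Psi>P) \<phi>)"

definition static_eq :: "('t::pt, 'c::pt, 'a::pt) psi \<Rightarrow> 'a \<Rightarrow> ('t, 'c, 'a) agent \<Rightarrow> ('t, 'c, 'a) agent \<Rightarrow> bool" where
  "static_eq S \<Psi> P Q \<longleftrightarrow> (\<forall>\<phi>. frame_ent S \<Psi> P \<phi> \<longleftrightarrow> frame_ent S \<Psi> Q \<phi>)"

inductive asubst :: "('t::pt, 'c::pt, 'a::pt) psi \<Rightarrow> ('t, 'c, 'a) agent \<Rightarrow> name \<Rightarrow> 't \<Rightarrow> ('t, 'c, 'a) agent \<Rightarrow> bool"
  for S where
  "asubst S P x L P' \<Longrightarrow> asubst S (Out M N P) x L (Out (subT S M [x] [L]) (subT S N [x] [L]) P')"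
| "asubst S P x L P' \<Longrightarrow> y \<noteq> x \<Longrightarrow> fresh y L \<Longrightarrow>
   asubst S (In M y P) x L (In (subT S M [x] [L]) y P')"
| "length cs' = length cs \<Longrightarrow>
   (\<forall>i < length cs. fst (cs' ! i) = subC S (fst (cs ! i)) [x] [L] \<and> asubst S (snd (cs ! i)) x L (snd (cs' ! i))) \<Longrightarrow>
   asubst S (Case cs) x L (Case cs')"
| "asubst S P x L P' \<Longrightarrow> y \<noteq> x \<Longrightarrow> fresh y L \<Longrightarrow> asubst S (Res y P) x L (Res y P')"
| "asubst S P x L P' \<Longrightarrow> asubst S Q x L Q' \<Longrightarrow> asubst S (Par P Q) x L (Par P' Q')"
| "asubst S P x L P' \<Longrightarrow> asubst S (Bang P) x L (Bang P')"
| "asubst S (Ass \<Psi>) x L (Ass (subA S \<Psi> [x] [L]))"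

definition subst_agent :: "('t::pt, 'c::pt, 'a::pt) psi \<Rightarrow> ('t, 'c, 'a) agent \<Rightarrow> name \<Rightarrow> 't \<Rightarrow> ('t, 'c, 'a) agent" where
  "subst_agent S P x L = (THE P'. asubst S P x L P')"

text \<open>AOut M as N: output  M(\<nu>as)N;  AIn M x: late input M(x);
  AInE M N: early input  M N;  ATau: \<tau>.\<close>
datatype 't act = AOut 't "name list" 't | AIn 't name | AInE 't 't | ATau

instantiation act :: (pt) pt begin
primrec swp_act :: "name \<Rightarrow> name \<Rightarrow> 'a act \<Rightarrow> 'a act" where
  "swp_act a b (AOut M as N) = AOut (swp a b M) (swp a b as) (swp a b N)"
| "swp_act a b (AIn M x) = AIn (swp a b M) (swap_name a b x)"
| "swp_act a b (AInE M N) = AInE (swp a b M) (swp a b N)"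
| "swp_act a b ATau = ATau"
instance ..
end

primrec bn :: "'t act \<Rightarrow> name set" where
  "bn (AOut M as N) = set as"
| "bn (AIn M x) = {x}"
| "bn (AInE M N) = {}"
| "bn ATau = {}"

inductive ltrans :: "('t::pt, 'c::pt, 'a::pt) psi \<Rightarrow> 'a \<Rightarrow> ('t, 'c, 'a) agent \<Rightarrow> 't act \<Rightarrow> ('t, 'c, 'a) agent \<Rightarrow> bool"
  for S where
  l_in: "entails S \<Psi> (chan_eq S M K) \<Longrightarrow> ltrans S \<Psi> (In M x P) (AIn K x) P"
| l_out: "entails S \<Psi> (chan_eq S M K) \<Longrightarrow> ltrans S \<Psi> (Out M N P) (AOut K [] N) P"
| l_case: "ltrans S \<Psi> P \<alpha> P' \<Longrightarrow> (\<phi>, P) \<in> set cs \<Longrightarrow> entails S \<Psi> \<phi> \<Longrightarrow> ltrans S \<Psi> (Case cs) \<alpha> P'"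
| l_com1: "frame_of S P bsP \<Psi>P \<Longrightarrow> frame_of S Q bsQ \<Psi>Q \<Longrightarrow>
   fresh_star (set bsP) (\<Psi>, \<Psi>Q, P, Q, M, bsQ) \<Longrightarrow> fresh_star (set bsQ) (\<Psi>, \<Psi>P, P, Q, K) \<Longrightarrow>
   ltrans S (acomp S \<Psi>Q \<Psi>) P (AOut M as N) P' \<Longrightarrow>
   ltrans S (acomp S \<Psi>P \<Psi>) Q (AIn K x) Q' \<Longrightarrow>
   entails S (acomp S (acomp S \<Psi> \<Psi>P) \<Psi>Q) (chan_eq S M K) \<Longrightarrow> fresh_star (set as) Q \<Longrightarrow>
   ltrans S \<Psi> (Par P Q) ATau (resl as (Par P' (subst_agent S Q' x N)))"
| l_com2: "frame_of S P bsP \<Psi>P \<Longrightarrow> frame_of S Q bsQ \<Psi>Q \<Longrightarrow>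
   fresh_star (set bsP) (\<Psi>, \<Psi>Q, P, Q, M, bsQ) \<Longrightarrow> fresh_star (set bsQ) (\<Psi>, \<Psi>P, P, Q, K) \<Longrightarrow>
   ltrans S (acomp S \<Psi>Q \<Psi>) P (AIn M x) P' \<Longrightarrow>
   ltrans S (acomp S \<Psi>P \<Psi>) Q (AOut K as N) Q' \<Longrightarrow>
   entails S (acomp S (acomp S \<Psi> \<Psi>P) \<Psi>Q) (chan_eq S M K) \<Longrightarrow> fresh_star (set as) P \<Longrightarrow>
   ltrans S \<Psi> (Par P Q) ATau (resl as (Par (subst_agent S P' x N) Q'))"
| l_par1: "frame_of S Q bsQ \<Psi>Q \<Longrightarrow> fresh_star (set bsQ) (\<Psi>, P, \<alpha>) \<Longrightarrow>
   ltrans S (acomp S \<Psi>Q \<Psi>) P \<alpha> P' \<Longrightarrow> fresh_star (bn \<alpha>) Q \<Longrightarrow>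
   ltrans S \<Psi> (Par P Q) \<alpha> (Par P' Q)"
| l_par2: "frame_of S P bsP \<Psi>P \<Longrightarrow> fresh_star (set bsP) (\<Psi>, Q, \<alpha>) \<Longrightarrow>
   ltrans S (acomp S \<Psi>P \<Psi>) Q \<alpha> Q' \<Longrightarrow> fresh_star (bn \<alpha>) P \<Longrightarrow>
   ltrans S \<Psi> (Par P Q) \<alpha> (Par P Q')"
| l_scope: "ltrans S \<Psi> P \<alpha> P' \<Longrightarrow> fresh b \<alpha> \<Longrightarrow> fresh b \<Psi> \<Longrightarrow> ltrans S \<Psi> (Res b P) \<alpha> (Res b P')"
| l_open: "ltrans S \<Psi> P (AOut M (as @ cs) N) P' \<Longrightarrow> b \<notin> set as \<Longrightarrow> b \<notin> set cs \<Longrightarrow>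
   fresh b \<Psi> \<Longrightarrow> fresh b M \<Longrightarrow> b \<in> supp N \<Longrightarrow>
   ltrans S \<Psi> (Res b P) (AOut M (as @ b # cs) N) P'"
| l_rep: "ltrans S \<Psi> (Par P (Bang P)) \<alpha> P' \<Longrightarrow> ltrans S \<Psi> (Bang P) \<alpha> P'"

inductive etrans :: "('t::pt, 'c::pt, 'a::pt) psi \<Rightarrow> 'a \<Rightarrow> ('t, 'c, 'a) agent \<Rightarrow> 't act \<Rightarrow> ('t, 'c, 'a) agent \<Rightarrow> bool"
  for S where
  e_in: "entails S \<Psi> (chan_eq S M K) \<Longrightarrow> etrans S \<Psi> (In M x P) (AInE K N) (subst_agent S P x N)"
| e_out: "entails S \<Psi> (chan_eq S M K) \<Longrightarrow> etrans S \<Psi> (Out M N P) (AOut K [] N) P"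
| e_case: "etrans S \<Psi> P \<alpha> P' \<Longrightarrow> (\<phi>, P) \<in> set cs \<Longrightarrow> entails S \<Psi> \<phi> \<Longrightarrow> etrans S \<Psi> (Case cs) \<alpha> P'"
| e_com1: "frame_of S P bsP \<Psi>P \<Longrightarrow> frame_of S Q bsQ \<Psi>Q \<Longrightarrow>
   fresh_star (set bsP) (\<Psi>, \<Psi>Q, P, Q, M, bsQ) \<Longrightarrow> fresh_star (set bsQ) (\<Psi>, \<Psi>P, P, Q, K) \<Longrightarrow>
   etrans S (acomp S \<Psi>Q \<Psi>) P (AOut M as N) P' \<Longrightarrow>
   etrans S (acomp S \<Psi>P \<Psi>) Q (AInE K N) Q' \<Longrightarrow>
   entails S (acomp S (acomp S \<Psi> \<Psi>P) \<Psi>Q) (chan_eq S M K) \<Longrightarrow> fresh_star (set as) Q \<Longrightarrow>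
   etrans S \<Psi> (Par P Q) ATau (resl as (Par P' Q'))"
| e_com2: "frame_of S P bsP \<Psi>P \<Longrightarrow> frame_of S Q bsQ \<Psi>Q \<Longrightarrow>
   fresh_star (set bsP) (\<Psi>, \<Psi>Q, P, Q, M, bsQ) \<Longrightarrow> fresh_star (set bsQ) (\<Psi>, \<Psi>P, P, Q, K) \<Longrightarrow>
   etrans S (acomp S \<Psi>Q \<Psi>) P (AInE M N) P' \<Longrightarrow>
   etrans S (acomp S \<Psi>P \<Psi>) Q (AOut K as N) Q' \<Longrightarrow>
   entails S (acomp S (acomp S \<Psi> \<Psi>P) \<Psi>Q) (chan_eq S M K) \<Longrightarrow> fresh_star (set as) P \<Longrightarrow>
   etrans S \<Psi> (Par P Q) ATau (resl as (Par P' Q'))"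
| e_par1: "frame_of S Q bsQ \<Psi>Q \<Longrightarrow> fresh_star (set bsQ) (\<Psi>, P, \<alpha>) \<Longrightarrow>
   etrans S (acomp S \<Psi>Q \<Psi>) P \<alpha> P' \<Longrightarrow> fresh_star (bn \<alpha>) Q \<Longrightarrow>
   etrans S \<Psi> (Par P Q) \<alpha> (Par P' Q)"
| e_par2: "frame_of S P bsP \<Psi>P \<Longrightarrow> fresh_star (set bsP) (\<Psi>, Q, \<alpha>) \<Longrightarrow>
   etrans S (acomp S \<Psi>P \<Psi>) Q \<alpha> Q' \<Longrightarrow> fresh_star (bn \<alpha>) P \<Longrightarrow>
   etrans S \<Psi> (Par P Q) \<alpha> (Par P Q')"
| e_scope: "etrans S \<Psi> P \<alpha> P' \<Longrightarrow> fresh b \<alpha> \<Longrightarrow> fresh b \<Psi> \<Longrightarrow> etrans S \<Psi> (Res b P) \<alpha> (Res b P')"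
| e_open: "etrans S \<Psi> P (AOut M (as @ cs) N) P' \<Longrightarrow> b \<notin> set as \<Longrightarrow> b \<notin> set cs \<Longrightarrow>
   fresh b \<Psi> \<Longrightarrow> fresh b M \<Longrightarrow> b \<in> supp N \<Longrightarrow>
   etrans S \<Psi> (Res b P) (AOut M (as @ b # cs) N) P'"
| e_rep: "etrans S \<Psi> (Par P (Bang P)) \<alpha> P' \<Longrightarrow> etrans S \<Psi> (Bang P) \<alpha> P'"

definition late_bisim :: "('t::pt, 'c::pt, 'a::pt) psi \<Rightarrow> ('a \<times> ('t, 'c, 'a) agent \<times> ('t, 'c, 'a) agent) set \<Rightarrow> bool" where
  "late_bisim S R \<longleftrightarrow> (\<forall>\<Psi> P Q. (\<Psi>, P, Q) \<in> R \<longrightarrow>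
     static_eq S \<Psi> P Q \<and>
     (\<Psi>, Q, P) \<in> R \<and>
     (\<forall>\<Psi>'. (acomp S \<Psi> \<Psi>', P, Q) \<in> R) \<and>
     (\<forall>\<alpha> P'. fresh_star (bn \<alpha>) \<Psi> \<and> fresh_star (bn \<alpha>) Q \<longrightarrow>
        (case \<alpha> of
           AIn M x \<Rightarrow> ltrans S \<Psi> P \<alpha> P' \<longrightarrow>
              (\<forall>L. \<exists>Q'. ltrans S \<Psi> Q \<alpha> Q' \<and>
                   (\<Psi>, subst_agent S P' x L, subst_agent S Q' x L) \<in> R)
         | _ \<Rightarrow> ltrans S \<Psi> P \<alpha> P' \<longrightarrow> (\<exists>Q'. ltrans S \<Psi> Q \<alpha> Q' \<and> (\<Psi>, P', Q') \<in> R))))"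

definition early_bisim :: "('t::pt, 'c::pt, 'a::pt) psi \<Rightarrow> ('a \<times> ('t, 'c, 'a) agent \<times> ('t, 'c, 'a) agent) set \<Rightarrow> bool" where
  "early_bisim S R \<longleftrightarrow> (\<forall>\<Psi> P Q. (\<Psi>, P, Q) \<in> R \<longrightarrow>
     static_eq S \<Psi> P Q \<and>
     (\<Psi>, Q, P) \<in> R \<and>
     (\<forall>\<Psi>'. (acomp S \<Psi> \<Psi>', P, Q) \<in> R) \<and>
     (\<forall>\<alpha> P'. fresh_star (bn \<alpha>) \<Psi> \<and> fresh_star (bn \<alpha>) Q \<longrightarrow>
        etrans S \<Psi> P \<alpha> P' \<longrightarrow> (\<exists>Q'. etrans S \<Psi> Q \<alpha> Q' \<and> (\<Psi>, P', Q') \<in> R)))"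

end

theory Submission
  imports Defs
begin

text \<open>
  A late input \<open>\<Psi> \<rhd> P \<longrightarrow>K(x) P'\<close> yields, for every \<open>N\<close>, the early input
  \<open>\<Psi> \<rhd> P \<longrightarrow>K N P'[x:=N]\<close>; conversely every early input \<open>K N\<close> arises in this way from a
  late input whose binder \<open>x\<close> may be chosen fresh for any given finite set of names, while outputs
  and \<open>\<tau>\<close> are derivable in both semantics alike. Consequently, for every triple of \<open>R\<close>, the
  transfer clause of late bisimulation (where \<open>Q\<close> may answer once for all instantiations \<open>L\<close>)
  and that of early bisimulation (where the received term is fixed before \<open>Q\<close> answers) are
  equivalent, and the remaining clauses of both notions coincide. The binder side conditions of the
  Par and Scope rules are met by alpha-renaming the binders of frames and of input prefixes.
\<close>

section \<open>Names and permutations\<close>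

lemma swap_name_simps[simp]:
  "swap_name a b a = b" "swap_name a b b = a"
  "c \<noteq> a \<Longrightarrow> c \<noteq> b \<Longrightarrow> swap_name a b c = c"
  "swap_name a a c = c"
  "swap_name a b (swap_name a b c) = c"
  by (auto simp: swap_name_def)

lemma swap_name_inj[simp]: "(swap_name a b c = swap_name a b d) = (c = d)" by (auto simp: swap_name_def)

lemma swap_name_comp: "swap_name a b (swap_name c d e) = swap_name (swap_name a b c) (swap_name a b d) (swap_name a b e)"
  by (auto simp: swap_name_def)

lemma ex_name_notin: "finite (A::nat set) \<Longrightarrow> \<exists>d. d \<notin> A"
  by (metis infinite_UNIV_nat ex_new_if_finite UNIV_I)

lemma fresh_iff_finite: "fresh a x \<longleftrightarrow> finite {b. swp a b x \<noteq> x}"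
  by (simp add: fresh_def supp_def)

context
  fixes type :: "'x::pt itself"
  assumes nominal: "nominal_type TYPE('x)"
begin

lemma swp_id[simp]: "swp a a (x::'x) = x"
  using nominal unfolding nominal_type_def by auto
lemma swp_inv[simp]: "swp a b (swp a b (x::'x)) = x"
  using nominal unfolding nominal_type_def by auto
lemma swp_comp: "swp a b (swp c d (x::'x)) = swp (swap_name a b c) (swap_name a b d) (swp a b x)"
  using nominal unfolding nominal_type_def by blast
lemma finite_supp[simp]: "finite (supp (x::'x))"
  using nominal unfolding nominal_type_def by auto

lemma swp_sym: "swp a b (x::'x) = swp b a x"
proof -
  have "swp a b (swp a b x) = swp b a (swp a b x)" using swp_comp[of a b a b x] by simp
  hence e: "x = swp b a (swp a b x)" by simp
  have "swp b a x = swp b a (swp b a (swp a b x))" using e by metis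
  thus ?thesis by simp
qed

lemma swp_eq_iff[simp]: "(swp a b (x::'x) = swp a b y) = (x = y)"
  by (metis swp_inv)

lemma supp_eqvt: "(a \<in> supp (swp c d (x::'x))) = (swap_name c d a \<in> supp x)"
proof -
  have eq: "{b. swp a b (swp c d x) \<noteq> swp c d x} = swap_name c d ` {b. swp (swap_name c d a) b x \<noteq> x}"
  proof -
    have k: "swp a b (swp c d x) = swp c d (swp (swap_name c d a) (swap_name c d b) x)" for b
      using swp_comp[of c d "swap_name c d a" "swap_name c d b" x] by simp
    show ?thesis
    proof (rule set_eqI, rule iffI)
      fix b assume "b \<in> {b. swp a b (swp c d x) \<noteq> swp c d x}"
      hence "swp (swap_name c d a) (swap_name c d b) x \<noteq> x" using k by auto
      thus "b \<in> swap_name c d ` {b. swp (swap_name c d a) b x \<noteq> x}"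
        by (intro image_eqI[of _ _ "swap_name c d b"]) auto
    next
      fix b assume "b \<in> swap_name c d ` {b. swp (swap_name c d a) b x \<noteq> x}"
      then obtain b' where "b = swap_name c d b'" "swp (swap_name c d a) b' x \<noteq> x" by auto
      thus "b \<in> {b. swp a b (swp c d x) \<noteq> swp c d x}" using k by auto
    qed
  qed
  have inj: "inj_on (swap_name c d) A" for A by (auto simp: inj_on_def)
  show ?thesis unfolding supp_def using eq finite_image_iff[OF inj] by auto
qed

lemma supp_swp: "supp (swp c d (x::'x)) = swap_name c d ` supp x"
proof (rule set_eqI)
  fix a show "a \<in> supp (swp c d x) \<longleftrightarrow> a \<in> swap_name c d ` supp x"
    unfolding supp_eqvt by (metis image_iff swap_name_simps(5))
qed

lemma fresh_eqvt[simp]: "fresh (swap_name c d a) (swp c d (x::'x)) = fresh a x"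
  by (simp only: fresh_def supp_eqvt swap_name_simps(5))

lemma fresh_eqvt2: "fresh a (swp c d (x::'x)) = fresh (swap_name c d a) x"
  by (metis fresh_eqvt swap_name_simps(5))

lemma fresh_swp_id: "fresh a (x::'x) \<Longrightarrow> fresh b x \<Longrightarrow> swp a b x = x"
proof -
  assume fa: "fresh a x" and fb: "fresh b x"
  show ?thesis
  proof (cases "a = b")
    case True thus ?thesis by simp
  next
    case False
    have "finite ({d. swp a d x \<noteq> x} \<union> {d. swp b d x \<noteq> x} \<union> {a, b})"
      using fa fb by (simp add: fresh_iff_finite)
    from ex_name_notin[OF this] obtain d where d: "d \<notin> {d. swp a d x \<noteq> x} \<union> {d. swp b d x \<noteq> x} \<union> {a, b}" ..
    hence d1: "swp a d x = x" "swp b d x = x" "d \<noteq> a" "d \<noteq> b" by auto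
    have "swp a d (swp b d (swp a d x)) = swp (swap_name a d b) (swap_name a d d) (swp a d (swp a d x))"
      by (rule swp_comp)
    also have "\<dots> = swp b a x" using d1 False by simp
    finally have "swp b a x = x" using d1 by simp
    thus ?thesis using swp_sym by metis
  qed
qed

lemma fresh_star_eqvt[simp]: "fresh_star (swap_name c d ` A) (swp c d (x::'x)) = fresh_star A x"
  unfolding fresh_star_def by auto

lemma obtain_fresh: "finite A \<Longrightarrow> \<exists>c. c \<notin> A \<and> fresh c (x::'x)"
proof -
  assume "finite A"
  hence "finite (A \<union> supp x)" by simp
  thus ?thesis using ex_name_notin unfolding fresh_def by blast
qed

end

lemma supp_via: "(\<And>a b. (swp a b x = x) = (swp a b y = y)) \<Longrightarrow> supp x = supp y"
  unfolding supp_def by auto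

lemma supp_pair[simp]: "supp (x, y) = supp x \<union> supp y"
proof -
  have "{b. swp a b (x, y) \<noteq> (x, y)} = {b. swp a b x \<noteq> x} \<union> {b. swp a b y \<noteq> y}" for a
    by (auto simp: swp_prod_def)
  thus ?thesis unfolding supp_def by auto
qed

lemma swp_pair[simp]: "swp a b (x, y) = (swp a b x, swp a b y)"
  by (simp add: swp_prod_def)

lemma fst_swp[simp]: "fst (swp a b p) = swp a b (fst p)" by (simp add: swp_prod_def)
lemma snd_swp[simp]: "snd (swp a b p) = swp a b (snd p)" by (simp add: swp_prod_def)

lemma swp_list_simps[simp]: "swp a b [] = []" "swp a b (x # xs) = swp a b x # swp a b xs"
  by (simp_all add: swp_list_def)

lemma swp_append[simp]: "swp a b (xs @ ys) = swp a b xs @ swp a b ys"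
  by (simp add: swp_list_def)

lemma supp_nil[simp]: "supp [] = {}"
  unfolding supp_def by simp

lemma supp_cons[simp]: "supp (x # xs) = supp x \<union> supp xs"
proof -
  have "{b. swp a b (x # xs) \<noteq> x # xs} = {b. swp a b x \<noteq> x} \<union> {b. swp a b xs \<noteq> xs}" for a
    by auto
  thus ?thesis unfolding supp_def by auto
qed

lemma supp_append[simp]: "supp (xs @ ys) = supp xs \<union> supp ys"
  by (induct xs) auto

lemma supp_list: "supp xs = \<Union> (supp ` set xs)"
  by (induct xs) auto

lemma swp_nat[simp]: "swp a b (c::nat) = swap_name a b c"
  by (simp add: swp_nat_def)

lemma supp_nat[simp]: "supp (c::nat) = {c}"
proof -
  have "infinite {b. swap_name c b c \<noteq> c}"
  proof -
    have "{b. swap_name c b c \<noteq> c} = UNIV - {c}" by (auto simp: swap_name_def)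
    thus ?thesis by (simp add: infinite_UNIV_nat)
  qed
  moreover have "a \<noteq> c \<Longrightarrow> finite {b. swap_name a b c \<noteq> c}" for a
  proof -
    assume "a \<noteq> c"
    hence "{b. swap_name a b c \<noteq> c} \<subseteq> {c}" by (auto simp: swap_name_def)
    thus ?thesis by (rule finite_subset) simp
  qed
  ultimately show ?thesis unfolding supp_def swp_nat by auto
qed

lemma fresh_nat[simp]: "fresh a (c::nat) = (a \<noteq> c)"
  by (simp add: fresh_def)

lemma supp_names[simp]: "supp (xs::name list) = set xs"
  by (induct xs) auto

lemma swp_names: "swp a b (xs::name list) = map (swap_name a b) xs"
  by (induct xs) auto

lemma set_swp_names: "set (swp a b (xs::name list)) = swap_name a b ` set xs"
  by (simp add: swp_names)

lemma nominal_nat[simp]: "nominal_type TYPE(nat)"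
proof -
  have "\<forall>a b c d (x::nat). swp a b (swp c d x) = swp (swap_name a b c) (swap_name a b d) (swp a b x)"
    by (simp only: swp_nat) (blast intro: swap_name_comp)
  thus ?thesis unfolding nominal_type_def by simp
qed

lemma nominal_prod[simp]:
  assumes "nominal_type TYPE('x::pt)" "nominal_type TYPE('y::pt)"
  shows "nominal_type TYPE('x \<times> 'y)"
  using assms unfolding nominal_type_def by (auto simp: swp_prod_def)

lemma nominal_list[simp]:
  assumes A: "nominal_type TYPE('x::pt)"
  shows "nominal_type TYPE('x list)"
proof -
  have "\<forall>a (x::'x list). swp a a x = x"
  proof (intro allI) fix a and x :: "'x list" show "swp a a x = x" using A by (induct x) auto qed
  moreover have "\<forall>a b (x::'x list). swp a b (swp a b x) = x"
  proof (intro allI) fix a b and x :: "'x list" show "swp a b (swp a b x) = x" using A by (induct x) auto qed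
  moreover have "\<forall>a b c d (x::'x list). swp a b (swp c d x) = swp (swap_name a b c) (swap_name a b d) (swp a b x)"
  proof (intro allI) fix a b c d and x :: "'x list" show "swp a b (swp c d x) = swp (swap_name a b c) (swap_name a b d) (swp a b x)"
      using swp_comp[OF A] by (induct x) auto qed
  moreover have "\<forall>x::'x list. finite (supp x)"
  proof
    fix x :: "'x list" show "finite (supp x)" using A by (induct x) auto
  qed
  ultimately show ?thesis unfolding nominal_type_def by blast
qed

lemma fresh_pair[simp]: "fresh a (x, y) = (fresh a x \<and> fresh a y)"
  by (simp add: fresh_def)
lemma fresh_cons[simp]: "fresh a (x # xs) = (fresh a x \<and> fresh a xs)"
  by (simp add: fresh_def)
lemma fresh_nil[simp]: "fresh a []"
  by (simp add: fresh_def)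
lemma fresh_append[simp]: "fresh a (xs @ ys) = (fresh a xs \<and> fresh a ys)"
  by (simp add: fresh_def)
lemma fresh_names[simp]: "fresh a (xs::name list) = (a \<notin> set xs)"
  by (simp add: fresh_def)

lemma fresh_star_pair[simp]: "fresh_star A (x, y) = (fresh_star A x \<and> fresh_star A y)"
  by (auto simp: fresh_star_def)
lemma fresh_star_names[simp]: "fresh_star A (xs::name list) = (A \<inter> set xs = {})"
  by (auto simp: fresh_star_def)
lemma fresh_star_nat[simp]: "fresh_star A (x::name) = (x \<notin> A)"
  by (auto simp: fresh_star_def)
lemma fresh_star_empty[simp]: "fresh_star {} x"
  by (simp add: fresh_star_def)
lemma fresh_star_insert[simp]: "fresh_star (insert a A) x = (fresh a x \<and> fresh_star A x)"
  by (simp add: fresh_star_def)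
lemma fresh_star_union[simp]: "fresh_star (A \<union> B) x = (fresh_star A x \<and> fresh_star B x)"
  by (auto simp: fresh_star_def)
lemma fresh_star_supp: "fresh_star A x = (A \<inter> supp x = {})"
  by (auto simp: fresh_star_def fresh_def)

lemma fresh_star_set_eqvt: assumes "nominal_type TYPE('x::pt)" "fresh_star (set bs) (X::'x)"
  shows "fresh_star (set (swp a b bs)) (swp a b X)"
  unfolding set_swp_names fresh_star_eqvt[OF assms(1)] by (rule assms(2))

lemma swap_image_Int[simp]: "swap_name a b ` A \<inter> swap_name a b ` B = swap_name a b ` (A \<inter> B)"
  by (rule image_Int[symmetric]) (auto simp: inj_on_def)
lemma swap_image_mem[simp]: "(swap_name a b c \<in> swap_name a b ` A) = (c \<in> A)"
  by (auto simp: image_iff)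

lemma swap_name_image_inter:
  assumes "b \<in> A" "c \<notin> A" "c \<notin> B" "finite A"
  shows "swap_name b c ` A \<inter> B = (A \<inter> B) - {b}"
proof -
  have "swap_name b c ` A = (A - {b}) \<union> {c}"
  proof
    show "swap_name b c ` A \<subseteq> A - {b} \<union> {c}" using assms by (auto simp: swap_name_def)
    show "A - {b} \<union> {c} \<subseteq> swap_name b c ` A"
    proof
      fix e assume "e \<in> A - {b} \<union> {c}"
      thus "e \<in> swap_name b c ` A"
      proof
        assume "e \<in> A - {b}" thus ?thesis using assms by (intro image_eqI[of _ _ e]) (auto simp: swap_name_def)
      next
        assume "e \<in> {c}" thus ?thesis using assms by (intro image_eqI[of _ _ b]) (auto simp: swap_name_def)
      qed
    qed
  qed
  thus ?thesis using assms by auto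
qed

lemma swp_act_simps[simp]:
  "swp a b (AOut M as N) = AOut (swp a b M) (swp a b as) (swp a b N)"
  "swp a b (AIn M x) = AIn (swp a b M) (swap_name a b x)"
  "swp a b (AInE M N) = AInE (swp a b M) (swp a b N)"
  "swp a b (ATau :: 't::pt act) = ATau"
  by simp_all

lemma supp_act[simp]:
  "supp (AOut M as N) = supp M \<union> set as \<union> supp N"
  "supp (AIn M x) = supp M \<union> {x}"
  "supp (AInE M N) = supp M \<union> supp N"
  "supp (ATau :: 't::pt act) = {}"
proof -
  have "supp (AOut M as N) = supp (M, as, N)" by (rule supp_via) auto
  thus "supp (AOut M as N) = supp M \<union> set as \<union> supp N" by auto
  have "supp (AIn M x) = supp (M, x)" by (rule supp_via) auto
  thus "supp (AIn M x) = supp M \<union> {x}" by auto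
  have "supp (AInE M N) = supp (M, N)" by (rule supp_via) auto
  thus "supp (AInE M N) = supp M \<union> supp N" by auto
  show "supp (ATau :: 't::pt act) = {}" unfolding supp_def by simp
qed

lemma nominal_act[simp]:
  assumes A: "nominal_type TYPE('t::pt)"
  shows "nominal_type TYPE('t act)"
proof -
  have "\<forall>a (x::'t act). swp a a x = x"
  proof (intro allI) fix a and x :: "'t act" show "swp a a x = x" using A nominal_list[OF nominal_nat]
      by (cases x) auto qed
  moreover have "\<forall>a b (x::'t act). swp a b (swp a b x) = x"
  proof (intro allI) fix a b and x :: "'t act" show "swp a b (swp a b x) = x" using A nominal_list[OF nominal_nat]
      by (cases x) auto qed
  moreover have "\<forall>a b c d (x::'t act). swp a b (swp c d x) = swp (swap_name a b c) (swap_name a b d) (swp a b x)"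
  proof (intro allI) fix a b c d and x :: "'t act" show "swp a b (swp c d x) = swp (swap_name a b c) (swap_name a b d) (swp a b x)"
      using swp_comp[OF A] swp_comp[OF nominal_list[OF nominal_nat]] swap_name_comp[of a b c d]
      by (cases x) (simp_all del: swp_nat) qed
  moreover have "\<forall>x::'t act. finite (supp x)"
  proof fix x :: "'t act" show "finite (supp x)" using A by (cases x) auto qed
  ultimately show ?thesis unfolding nominal_type_def by blast
qed

lemma bn_eqvt: "bn (swp a b \<alpha>) = swap_name a b ` bn \<alpha>"
  by (cases \<alpha>) (auto simp: swp_names)

lemma fresh_star_bn_eqvt: assumes "nominal_type TYPE('x::pt)" "fresh_star (bn \<alpha>) (X::'x)"
  shows "fresh_star (bn (swp a b \<alpha>)) (swp a b X)"
  unfolding bn_eqvt fresh_star_eqvt[OF assms(1)] by (rule assms(2))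

lemma fresh_act[simp]:
  "fresh a (AIn K x) = (fresh a K \<and> a \<noteq> x)"
  "fresh a (AInE K N) = (fresh a K \<and> fresh a N)"
  "fresh a (AOut M as N) = (fresh a M \<and> a \<notin> set as \<and> fresh a N)"
  "fresh a (ATau :: 't::pt act)"
  by (auto simp: fresh_def)

section \<open>Raw agents and alpha-equivalence\<close>

lemma swp_ragent[simp]: "swp a b (P::('t::pt,'c::pt,'a::pt) ragent) = rswp a b P"
  by (simp add: swp_ragent_def)

lemma map_swp_cs: "map (map_prod (swp a b) (rswp a b)) cs = swp a b cs"
  by (induct cs) (auto simp: map_prod_def split_def)

lemma rswp_case_eq: "rswp a b (RCase cs) = RCase (swp a b cs)"
  by (simp add: map_swp_cs)

lemma supp_ragent[simp]:
  "supp (ROut M N P) = supp M \<union> supp N \<union> supp P"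
  "supp (RIn M x P) = supp M \<union> {x} \<union> supp P"
  "supp (RCase cs) = supp cs"
  "supp (RRes x P) = {x} \<union> supp P"
  "supp (RPar P Q) = supp P \<union> supp Q"
  "supp (RBang P) = supp P"
  "supp (RAss \<Psi>) = supp \<Psi>"
proof -
  have "supp (ROut M N P) = supp (M, N, P)" by (rule supp_via) auto
  thus "supp (ROut M N P) = supp M \<union> supp N \<union> supp P" by auto
  have "supp (RIn M x P) = supp (M, x, P)" by (rule supp_via) auto
  thus "supp (RIn M x P) = supp M \<union> {x} \<union> supp P" by auto
  show "supp (RCase cs) = supp cs" by (rule supp_via) (simp add: map_swp_cs)
  have "supp (RRes x P) = supp (x, P)" by (rule supp_via) auto
  thus "supp (RRes x P) = {x} \<union> supp P" by auto
  have "supp (RPar P Q) = supp (P, Q)" by (rule supp_via) auto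
  thus "supp (RPar P Q) = supp P \<union> supp Q" by auto
  show "supp (RBang P) = supp P" by (rule supp_via) auto
  show "supp (RAss \<Psi>) = supp \<Psi>" by (rule supp_via) auto
qed

primrec rfv :: "('t::pt,'c::pt,'a::pt) ragent \<Rightarrow> name set" where
  "rfv (ROut M N P) = supp M \<union> supp N \<union> rfv P"
| "rfv (RIn M x P) = supp M \<union> (rfv P - {x})"
| "rfv (RCase cs) = \<Union> (set (map (\<lambda>(\<phi>, X). supp \<phi> \<union> X) (map (map_prod id rfv) cs)))"
| "rfv (RRes x P) = rfv P - {x}"
| "rfv (RPar P Q) = rfv P \<union> rfv Q"
| "rfv (RBang P) = rfv P"
| "rfv (RAss \<Psi>) = supp \<Psi>"

lemma rfv_case: "rfv (RCase cs) = (\<Union>(\<phi>, P)\<in>set cs. supp \<phi> \<union> rfv P)"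
  by (auto simp: split_def)

declare rfv.simps(3)[simp del]
declare rfv_case[simp]

lemma swap_image_diff: "b \<notin> A \<Longrightarrow> swap_name a b ` A - {b} = A - {a}"
  by (auto simp: swap_name_def image_iff split: if_splits)

lemma swap_image_diff2: "swap_name a b ` (A - {x}) = swap_name a b ` A - {swap_name a b x}"
  by (auto simp: image_iff)

lemma size_list_cong: "(\<And>x. x \<in> set xs \<Longrightarrow> f x = g x) \<Longrightarrow> size_list f xs = size_list g xs"
  by (induct xs) auto

lemma snd_in_snds[simp]: "P \<in> Basic_BNFs.snds (\<phi>, P)"
  using snds.intros[of "(\<phi>, P)"] by simp

lemma size_rswp[simp]: "size (rswp a b P) = size P"
proof (induction P)
  case (RCase cs)
  thus ?case by (auto simp: size_list_map intro!: size_list_cong)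
qed auto

lemma size_case_lt: "(\<phi>, p) \<in> set cs \<Longrightarrow> size p < size (RCase cs)"
proof -
  assume "(\<phi>, p) \<in> set cs"
  hence "size p < size_list (size_prod (\<lambda>x. 0) size) cs + 1"
    using size_list_estimation[of "(\<phi>, p)" cs "size p" "size_prod (\<lambda>x. 0) size"] by auto
  thus ?thesis by simp
qed

lemma ralpha_refl[simp]: "ralpha P P" by (rule al_refl)

lemma ralpha_case_list_append:
  "list_all2 (\<lambda>(\<phi>, p) (\<psi>, q). \<phi> = \<psi> \<and> ralpha p q) xs ys \<Longrightarrow> ralpha (RCase (zs @ xs)) (RCase (zs @ ys))"
proof (induction xs ys arbitrary: zs rule: list_all2_induct)
  case Nil thus ?case by simp
next
  case (Cons x xs y ys)
  obtain \<phi> p where x: "x = (\<phi>, p)" by (cases x)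
  obtain \<psi> q where y: "y = (\<psi>, q)" by (cases y)
  have "ralpha (RCase (zs @ (\<phi>, p) # xs)) (RCase (zs @ (\<phi>, q) # xs))" using Cons x y by (auto intro: al_ccase)
  moreover have "ralpha (RCase ((zs @ [(\<phi>, q)]) @ xs)) (RCase ((zs @ [(\<phi>, q)]) @ ys))" using Cons by blast
  ultimately show ?case using x y Cons by (auto intro: al_trans)
qed

lemma ralpha_case_list:
  "list_all2 (\<lambda>(\<phi>, p) (\<psi>, q). \<phi> = \<psi> \<and> ralpha p q) xs ys \<Longrightarrow> ralpha (RCase xs) (RCase ys)"
  using ralpha_case_list_append[of xs ys "[]"] by simp

lemma list_all2_choose:
  "(\<And>\<phi> p. (\<phi>, p) \<in> set cs \<Longrightarrow> \<exists>q. Pr p q) \<Longrightarrow>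
   \<exists>cs'. list_all2 (\<lambda>(\<phi>, p) (\<psi>, q). \<phi> = \<psi> \<and> Pr p q) cs cs'"
proof (induction cs)
  case Nil thus ?case by simp
next
  case (Cons c cs)
  obtain \<phi> p where c: "c = (\<phi>, p)" by (cases c)
  then obtain q where "Pr p q" using Cons.prems by auto
  moreover obtain cs' where "list_all2 (\<lambda>(\<phi>, p) (\<psi>, q). \<phi> = \<psi> \<and> Pr p q) cs cs'" using Cons by auto
  ultimately show ?case using c by (intro exI[of _ "(\<phi>, q) # cs'"]) auto
qed

text \<open>The index of the top-level constructor, an alpha-invariant separating the agent
  constructors.\<close>
primrec rshape :: "('t,'c,'a) ragent \<Rightarrow> nat" where
  "rshape (ROut M N P) = 0" | "rshape (RIn M x P) = 1" | "rshape (RCase cs) = 2" | "rshape (RRes x P) = 3"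
| "rshape (RPar P Q) = 4" | "rshape (RBang P) = 5" | "rshape (RAss \<Psi>) = 6"

lemma ralpha_shape: "ralpha p q \<Longrightarrow> rshape p = rshape q"
  by (induct rule: ralpha.induct) auto

text \<open>Alpha-equivalence read off the top-level constructors; \<open>ralpha_imp_top\<close> yields the
  injectivity of the agent constructors.\<close>
fun ralpha_top :: "('t::pt,'c::pt,'a::pt) ragent \<Rightarrow> ('t,'c,'a) ragent \<Rightarrow> bool" where
  "ralpha_top (ROut M N p) (ROut M' N' q) = (M = M' \<and> N = N' \<and> ralpha p q)"
| "ralpha_top (RIn M x p) (RIn M' y q) = (M = M' \<and> rfv p - {x} = rfv q - {y} \<and> (\<forall>c. c \<notin> rfv p - {x} \<longrightarrow> ralpha (rswp x c p) (rswp y c q)))"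
| "ralpha_top (RCase xs) (RCase ys) = list_all2 (\<lambda>(\<phi>, p) (\<psi>, q). \<phi> = \<psi> \<and> ralpha p q) xs ys"
| "ralpha_top (RRes x p) (RRes y q) = (rfv p - {x} = rfv q - {y} \<and> (\<forall>c. c \<notin> rfv p - {x} \<longrightarrow> ralpha (rswp x c p) (rswp y c q)))"
| "ralpha_top (RPar p p') (RPar q q') = (ralpha p q \<and> ralpha p' q')"
| "ralpha_top (RBang p) (RBang q) = ralpha p q"
| "ralpha_top (RAss \<Psi>) (RAss \<Psi>') = (\<Psi> = \<Psi>')"
| "ralpha_top _ _ = False"

lemma ralpha_size: "ralpha p q \<Longrightarrow> size p = size q"
  by (induct rule: ralpha.induct) auto

text \<open>The parameter \<open>params\<close> carries no information; it only fixes the three types.\<close>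
locale nominal_params =
  fixes params :: "('t::pt \<times> 'c::pt \<times> 'a::pt) itself"
  assumes nominal_terms[simp]: "nominal_type TYPE('t)"
    and nominal_conditions[simp]: "nominal_type TYPE('c)"
    and nominal_assertions[simp]: "nominal_type TYPE('a)"
begin

lemma rswp_id: "rswp a a (P::('t,'c,'a) ragent) = P"
proof (induction P)
  case (RCase cs) thus ?case using nominal_conditions by (auto intro!: map_idI)
qed (use nominal_terms nominal_conditions nominal_assertions in auto)

lemma rswp_inv: "rswp a b (rswp a b (P::('t,'c,'a) ragent)) = P"
proof (induction P)
  case (RCase cs) thus ?case using nominal_conditions by (auto intro!: map_idI)
qed (use nominal_terms nominal_conditions nominal_assertions in auto)

lemma rswp_comp: "rswp a b (rswp c d (P::('t,'c,'a) ragent)) = rswp (swap_name a b c) (swap_name a b d) (rswp a b P)"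
proof (induction P)
  case (RCase cs) thus ?case using swp_comp[OF nominal_conditions] by (auto)
qed (use swp_comp[OF nominal_terms] swp_comp[OF nominal_conditions] swp_comp[OF nominal_assertions] swap_name_comp[of a b c d] in auto)

lemma rfinite: "finite (supp (P::('t,'c,'a) ragent))"
proof (induction P)
  case (RCase cs)
  have "finite (supp cs)" unfolding supp_list using RCase nominal_conditions
    by (auto simp: fresh_def)
  thus ?case by simp
qed (use nominal_terms nominal_assertions in auto)

lemma nominal_ragent[simp]: "nominal_type TYPE(('t,'c,'a) ragent)"
  unfolding nominal_type_def using rswp_id rswp_inv rswp_comp rfinite by auto

lemma rfv_rswp: "rfv (rswp a b (P::('t,'c,'a) ragent)) = swap_name a b ` rfv P"
proof (induction P)
  case (ROut M N P) thus ?case by (simp add: supp_swp image_Un)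
next
  case (RIn M x P) thus ?case by (simp add: supp_swp image_Un swap_image_diff2)
next
  case (RCase cs) thus ?case
    by (auto simp: supp_swp image_Un image_UN split_def)
next
  case (RRes x P) thus ?case by (simp add: swap_image_diff2)
next
  case (RPar P Q) thus ?case by (simp add: image_Un)
next
  case (RAss \<Psi>) thus ?case by (simp add: supp_swp)
qed simp

lemma rfv_supp: "rfv (P::('t,'c,'a) ragent) \<subseteq> supp P"
proof (induction P)
  case (RCase cs)
  have h: "\<And>\<phi> P. (\<phi>, P) \<in> set cs \<Longrightarrow> rfv P \<subseteq> supp P" using RCase by (metis snd_in_snds)
  show ?case
  proof
    fix e assume "e \<in> rfv (RCase cs)"
    then obtain \<phi> P where i: "(\<phi>, P) \<in> set cs" "e \<in> supp \<phi> \<union> rfv P" by auto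
    hence "e \<in> supp (\<phi>, P)" using h by auto
    moreover have "supp (\<phi>, P) \<subseteq> supp cs" unfolding supp_list using i(1) by blast
    ultimately show "e \<in> supp (RCase cs)" by auto
  qed
qed auto

lemma ralpha_eqvt: "ralpha (P::('t,'c,'a) ragent) Q \<Longrightarrow> ralpha (rswp a b P) (rswp a b Q)"
proof (induction rule: ralpha.induct)
  case (al_res b' P a')
  have "fresh (swap_name a b b') (rswp a b P)" using al_res fresh_eqvt[OF nominal_ragent] by (metis swp_ragent)
  hence "ralpha (RRes (swap_name a b a') (rswp a b P)) (RRes (swap_name a b b') (swp (swap_name a b a') (swap_name a b b') (rswp a b P)))"
    by (rule ralpha.al_res)
  thus ?case using rswp_comp[of a b a' b' P] by simp
next
  case (al_in b' P M a')
  have "fresh (swap_name a b b') (rswp a b P)" using al_in fresh_eqvt[OF nominal_ragent] by (metis swp_ragent)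
  hence "ralpha (RIn (swp a b M) (swap_name a b a') (rswp a b P)) (RIn (swp a b M) (swap_name a b b') (swp (swap_name a b a') (swap_name a b b') (rswp a b P)))"
    by (rule ralpha.al_in)
  thus ?case using rswp_comp[of a b a' b' P] by simp
next
  case (al_ccase P Q xs \<phi> ys)
  thus ?case by (simp add: ralpha.al_ccase)
qed (auto intro: ralpha.intros)

lemma ralpha_rfv: "ralpha (P::('t,'c,'a) ragent) Q \<Longrightarrow> rfv P = rfv Q"
proof (induction rule: ralpha.induct)
  case (al_res b P a)
  have "b \<notin> rfv P" using al_res rfv_supp unfolding fresh_def by blast
  thus ?case by (simp add: rfv_rswp swap_image_diff)
next
  case (al_in b P M a)
  have "b \<notin> rfv P" using al_in rfv_supp unfolding fresh_def by blast
  thus ?case by (simp add: rfv_rswp swap_image_diff)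
qed auto

lemma ralpha_avoiding: "finite A \<Longrightarrow> \<exists>Q. ralpha (P::('t,'c,'a) ragent) Q \<and> supp Q \<inter> A \<subseteq> rfv P"
proof (induction P arbitrary: A)
  case (ROut M N P)
  then obtain Q where "ralpha P Q" "supp Q \<inter> A \<subseteq> rfv P" by blast
  thus ?case by (intro exI[of _ "ROut M N Q"]) (auto intro: al_cout)
next
  case (RIn M x P)
  then obtain Q where Q: "ralpha P Q" "supp Q \<inter> A \<subseteq> rfv P" by blast
  obtain x' where x': "x' \<notin> A" "x' \<notin> supp Q"
    using ex_name_notin[of "A \<union> supp Q"] RIn.prems rfinite by auto
  have "ralpha (RIn M x P) (RIn M x Q)" using Q(1) by (rule al_cin)
  moreover have "ralpha (RIn M x Q) (RIn M x' (swp x x' Q))" using x' by (intro al_in) (simp add: fresh_def)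
  moreover have "supp (RIn M x' (rswp x x' Q)) \<inter> A \<subseteq> rfv (RIn M x P)"
  proof
    fix e assume e: "e \<in> supp (RIn M x' (rswp x x' Q)) \<inter> A"
    show "e \<in> rfv (RIn M x P)"
    proof (cases "e \<in> supp M")
      case True thus ?thesis by simp
    next
      case False
      with e x' have "e \<in> supp (rswp x x' Q)" by auto
      then obtain e' where e': "e' \<in> supp Q" "e = swap_name x x' e'"
        using supp_swp[OF nominal_ragent, of x x' Q] by auto
      have "e' \<noteq> x" using e' e x' by auto
      moreover have "e' \<noteq> x'" using e' x' by auto
      ultimately have "e = e'" using e' by simp
      thus ?thesis using e e' Q \<open>e' \<noteq> x\<close> by auto
    qed
  qed
  ultimately show ?case by (intro exI[of _ "RIn M x' (rswp x x' Q)"]) (auto intro: al_trans)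
next
  case (RCase cs)
  have "\<And>\<phi> p. (\<phi>, p) \<in> set cs \<Longrightarrow> \<exists>q. ralpha p q \<and> supp q \<inter> A \<subseteq> rfv p"
    using RCase by (metis snd_in_snds)
  then obtain cs' where cs': "list_all2 (\<lambda>(\<phi>, p) (\<psi>, q). \<phi> = \<psi> \<and> (ralpha p q \<and> supp q \<inter> A \<subseteq> rfv p)) cs cs'"
    using list_all2_choose[of cs "\<lambda>p q. ralpha p q \<and> supp q \<inter> A \<subseteq> rfv p"] by blast
  have "list_all2 (\<lambda>(\<phi>, p) (\<psi>, q). \<phi> = \<psi> \<and> ralpha p q) cs cs'"
    using cs' by (rule list_all2_mono) auto
  hence "ralpha (RCase cs) (RCase cs')" by (rule ralpha_case_list)
  moreover have "supp (RCase cs') \<inter> A \<subseteq> rfv (RCase cs)"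
  proof
    fix e assume e: "e \<in> supp (RCase cs') \<inter> A"
    then obtain \<psi> q where "(\<psi>, q) \<in> set cs'" "e \<in> supp \<psi> \<union> supp q" by (auto simp: supp_list)
    then obtain i where i: "i < length cs'" "cs' ! i = (\<psi>, q)" by (auto simp: in_set_conv_nth)
    obtain \<phi> p where p: "cs ! i = (\<phi>, p)" by (cases "cs ! i")
    have "i < length cs" using list_all2_lengthD[OF cs'] i(1) by simp
    hence pin: "(\<phi>, p) \<in> set cs" using p by (metis nth_mem)
    have "\<phi> = \<psi> \<and> (ralpha p q \<and> supp q \<inter> A \<subseteq> rfv p)"
      using list_all2_nthD[OF cs' \<open>i < length cs\<close>] p i by auto
    thus "e \<in> rfv (RCase cs)" using pin e \<open>e \<in> supp \<psi> \<union> supp q\<close> by auto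
  qed
  ultimately show ?case by blast
next
  case (RRes x P)
  then obtain Q where Q: "ralpha P Q" "supp Q \<inter> A \<subseteq> rfv P" by blast
  obtain x' where x': "x' \<notin> A" "x' \<notin> supp Q"
    using ex_name_notin[of "A \<union> supp Q"] RRes.prems rfinite by auto
  have "ralpha (RRes x P) (RRes x Q)" using Q(1) by (rule al_cres)
  moreover have "ralpha (RRes x Q) (RRes x' (swp x x' Q))" using x' by (intro al_res) (simp add: fresh_def)
  moreover have "supp (RRes x' (rswp x x' Q)) \<inter> A \<subseteq> rfv (RRes x P)"
  proof
    fix e assume e: "e \<in> supp (RRes x' (rswp x x' Q)) \<inter> A"
    with x' have "e \<in> supp (rswp x x' Q)" by auto
    then obtain e' where e': "e' \<in> supp Q" "e = swap_name x x' e'"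
      using supp_swp[OF nominal_ragent, of x x' Q] by auto
    have "e' \<noteq> x" using e' e x' by auto
    moreover have "e' \<noteq> x'" using e' x' by auto
    ultimately have "e = e'" using e' by simp
    thus "e \<in> rfv (RRes x P)" using e e' Q \<open>e' \<noteq> x\<close> by auto
  qed
  ultimately show ?case by (intro exI[of _ "RRes x' (rswp x x' Q)"]) (auto intro: al_trans)
next
  case (RPar P1 P2)
  obtain Q1 where Q1: "ralpha P1 Q1" "supp Q1 \<inter> A \<subseteq> rfv P1" using RPar.IH(1)[OF RPar.prems] by blast
  obtain Q2 where Q2: "ralpha P2 Q2" "supp Q2 \<inter> A \<subseteq> rfv P2" using RPar.IH(2)[OF RPar.prems] by blast
  have "ralpha (RPar P1 P2) (RPar Q1 P2)" using Q1(1) by (rule al_cpar1)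
  moreover have "ralpha (RPar Q1 P2) (RPar Q1 Q2)" using Q2(1) by (rule al_cpar2)
  ultimately have "ralpha (RPar P1 P2) (RPar Q1 Q2)" by (rule al_trans)
  thus ?case using Q1 Q2 by (intro exI[of _ "RPar Q1 Q2"]) auto
next
  case (RBang P)
  then obtain Q where "ralpha P Q" "supp Q \<inter> A \<subseteq> rfv P" by blast
  thus ?case by (intro exI[of _ "RBang Q"]) (auto intro: al_cbang)
next
  case (RAss \<Psi>) thus ?case by (intro exI[of _ "RAss \<Psi>"]) auto
qed

lemma ralpha_fresh_swp: "a \<notin> rfv (P::('t,'c,'a) ragent) \<Longrightarrow> b \<notin> rfv P \<Longrightarrow> ralpha (rswp a b P) P"
proof -
  assume a: "a \<notin> rfv P" and b: "b \<notin> rfv P"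
  obtain Q where Q: "ralpha P Q" "supp Q \<inter> {a, b} \<subseteq> rfv P" using ralpha_avoiding[of "{a, b}" P] by auto
  hence "fresh a Q" "fresh b Q" using a b unfolding fresh_def by auto
  hence "rswp a b Q = Q" using fresh_swp_id[OF nominal_ragent] by (metis swp_ragent)
  moreover have "ralpha (rswp a b P) (rswp a b Q)" using Q ralpha_eqvt by blast
  ultimately show ?thesis using Q by (metis al_sym al_trans)
qed

lemma ralpha_commute: "ralpha p q = ralpha q p"
  by (metis al_sym)

lemma list_all2_ralpha_sym:
  "list_all2 (\<lambda>(\<phi>, p) (\<psi>, q). \<phi> = \<psi> \<and> ralpha p q) xs ys \<Longrightarrow> list_all2 (\<lambda>(\<phi>, p) (\<psi>, q). \<phi> = \<psi> \<and> ralpha p q) ys xs"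
  by (induct rule: list_all2_induct) (auto simp: ralpha_commute)

lemma ralpha_top_sym: "ralpha_top (p::('t,'c,'a) ragent) q \<Longrightarrow> ralpha_top q p"
proof (induct p q rule: ralpha_top.induct)
  case (3 xs ys)
  thus ?case by (simp add: list_all2_ralpha_sym)
qed (auto simp: ralpha_commute)

lemma list_all2_ralpha_trans:
  "list_all2 (\<lambda>(\<phi>, p) (\<psi>, q). \<phi> = \<psi> \<and> ralpha p q) xs ys \<Longrightarrow> list_all2 (\<lambda>(\<phi>, p) (\<psi>, q). \<phi> = \<psi> \<and> ralpha p q) ys zs
   \<Longrightarrow> list_all2 (\<lambda>(\<phi>, p) (\<psi>, q). \<phi> = \<psi> \<and> ralpha p q) xs zs"
  by (induct xs ys arbitrary: zs rule: list_all2_induct) (auto simp: list_all2_Cons1 intro: al_trans)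

lemma ralpha_top_trans: "ralpha_top (p::('t,'c,'a) ragent) q \<Longrightarrow> ralpha_top q r \<Longrightarrow> ralpha_top p r"
proof (induct p q arbitrary: r rule: ralpha_top.induct)
  case (1 M N p M' N' q) thus ?case by (cases r; simp; blast intro: al_trans)
next
  case (2 M x p M' y q) thus ?case by (cases r; simp; blast intro: al_trans)
next
  case (3 xs ys) thus ?case by (cases r; simp; blast intro: list_all2_ralpha_trans)
next
  case (4 x p y q) thus ?case by (cases r; simp; blast intro: al_trans)
next
  case (5 p p' q q') thus ?case by (cases r; simp; blast intro: al_trans)
next
  case (6 p q) thus ?case by (cases r; simp; blast intro: al_trans)
next
  case (7 \<Psi> \<Psi>') thus ?case by (cases r) auto
qed auto

lemma ralpha_swap_binder:
  assumes "fresh b (P::('t,'c,'a) ragent)" "c \<notin> rfv P - {a}"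
  shows "ralpha (rswp a c P) (rswp b c (rswp a b P))"
proof -
  have bP: "b \<notin> rfv P" using assms(1) rfv_supp unfolding fresh_def by blast
  show ?thesis
  proof (cases "c = a")
    case True
    have "rswp b a (rswp a b P) = P" using swp_sym[OF nominal_ragent, of b a "rswp a b P"] rswp_inv by simp
    thus ?thesis using True by (simp add: rswp_id)
  next
    case ca: False
    show ?thesis
    proof (cases "a = b")
      case True thus ?thesis by (simp add: rswp_id)
    next
      case ab: False
      show ?thesis
      proof (cases "c = b")
        case True thus ?thesis by (simp add: rswp_id)
      next
        case cb: False
        have "rswp b c (rswp a b P) = rswp (swap_name b c a) (swap_name b c b) (rswp b c P)" by (rule rswp_comp)
        also have "\<dots> = rswp a c (rswp b c P)" using ca ab cb by simp
        finally have e: "rswp b c (rswp a b P) = rswp a c (rswp b c P)" .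
        have "c \<notin> rfv P" using assms(2) ca by auto
        hence "ralpha (rswp b c P) P" using bP by (intro ralpha_fresh_swp) auto
        hence "ralpha (rswp a c (rswp b c P)) (rswp a c P)" by (rule ralpha_eqvt)
        thus ?thesis using e by (simp add: al_sym)
      qed
    qed
  qed
qed

lemma ralpha_imp_top: "ralpha (p::('t,'c,'a) ragent) q \<Longrightarrow> ralpha_top p q"
proof (induction rule: ralpha.induct)
  case (al_refl P)
  show ?case by (cases P) (auto intro: list.rel_refl_strong)
next
  case (al_sym P Q) thus ?case by (blast intro: ralpha_top_sym)
next
  case (al_trans P Q R) thus ?case by (blast intro: ralpha_top_trans)
next
  case (al_res b P a)
  have "b \<notin> rfv P" using al_res rfv_supp unfolding fresh_def by blast
  hence "rfv (rswp a b P) - {b} = rfv P - {a}" by (simp add: rfv_rswp swap_image_diff)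
  thus ?case using ralpha_swap_binder[OF al_res] by simp
next
  case (al_in b P M a)
  have "b \<notin> rfv P" using al_in rfv_supp unfolding fresh_def by blast
  hence "rfv (rswp a b P) - {b} = rfv P - {a}" by (simp add: rfv_rswp swap_image_diff)
  thus ?case using ralpha_swap_binder[OF al_in] by simp
next
  case (al_cin P Q M x) thus ?case using ralpha_rfv[OF al_cin(1)] by (auto intro: ralpha_eqvt)
next
  case (al_cres P Q x) thus ?case using ralpha_rfv[OF al_cres(1)] by (auto intro: ralpha_eqvt)
next
  case (al_ccase P Q xs \<phi> ys)
  thus ?case by (auto intro!: list_all2_appendI list.rel_refl_strong)
qed auto

end

lemma ralpha_abs_eq: "(abs_agent r = abs_agent s) = ralpha r s"
  using Quotient3_rel[OF Quotient3_agent, of r s] by (auto intro: al_refl)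
lemma abs_rep[simp]: "abs_agent (rep_agent P) = P"
  by (rule Quotient3_abs_rep[OF Quotient3_agent])
lemma rep_abs: "ralpha (rep_agent (abs_agent r)) r"
  by (rule Quotient3_rep_abs[OF Quotient3_agent]) (rule al_refl)

lemma abs_ROut: "abs_agent (ROut M N r) = Out M N (abs_agent r)"
  unfolding Out_def ralpha_abs_eq by (rule al_cout, rule al_sym, rule rep_abs)
lemma abs_RIn: "abs_agent (RIn M x r) = In M x (abs_agent r)"
  unfolding In_def ralpha_abs_eq by (rule al_cin, rule al_sym, rule rep_abs)
lemma abs_RRes: "abs_agent (RRes x r) = Res x (abs_agent r)"
  unfolding Res_def ralpha_abs_eq by (rule al_cres, rule al_sym, rule rep_abs)
lemma abs_RBang: "abs_agent (RBang r) = Bang (abs_agent r)"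
  unfolding Bang_def ralpha_abs_eq by (rule al_cbang, rule al_sym, rule rep_abs)
lemma abs_RAss: "abs_agent (RAss \<Psi>) = Ass \<Psi>"
  unfolding Ass_def ..
lemma abs_RPar: "abs_agent (RPar r s) = Par (abs_agent r) (abs_agent s)"
  unfolding Par_def ralpha_abs_eq
  by (rule al_trans, rule al_cpar1, rule al_sym, rule rep_abs, rule al_cpar2, rule al_sym, rule rep_abs)
lemma abs_RCase: "abs_agent (RCase cs) = Case (map (map_prod id abs_agent) cs)"
  unfolding Case_def ralpha_abs_eq
proof (rule ralpha_case_list)
  show "list_all2 (\<lambda>(\<phi>, p) (\<psi>, q). \<phi> = \<psi> \<and> ralpha p q) cs (map (map_prod id rep_agent) (map (map_prod id abs_agent) cs))"
    unfolding list_all2_map2 by (rule list.rel_refl_strong) (auto intro: al_sym[OF rep_abs])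
qed

definition ashape :: "('t::pt,'c::pt,'a::pt) agent \<Rightarrow> nat" where "ashape P = rshape (rep_agent P)"

lemma ashape_abs: "ashape (abs_agent r) = rshape r"
  unfolding ashape_def using ralpha_shape[OF rep_abs] .

lemma ashape_simps[simp]: "ashape (Out M N P) = 0" "ashape (In M x P) = 1" "ashape (Case cs) = 2"
  "ashape (Res x P) = 3" "ashape (Par P Q) = 4" "ashape (Bang P) = 5" "ashape (Ass \<Psi>) = 6"
  by (simp_all add: Out_def In_def Case_def Res_def Par_def Bang_def Ass_def ashape_abs)

lemma agent_distinct[simp]:
  "Out M N P \<noteq> In M' y P'" "Out M N P \<noteq> Case cs" "Out M N P \<noteq> Res y P'" "Out M N P \<noteq> Par P1 P2" "Out M N P \<noteq> Bang P'" "Out M N P \<noteq> Ass \<Psi>"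
  "In M x P \<noteq> Out M' N' P'" "In M x P \<noteq> Case cs" "In M x P \<noteq> Res y P'" "In M x P \<noteq> Par P1 P2" "In M x P \<noteq> Bang P'" "In M x P \<noteq> Ass \<Psi>"
  "Case cs \<noteq> Out M' N' P'" "Case cs \<noteq> In M' y P'" "Case cs \<noteq> Res y P'" "Case cs \<noteq> Par P1 P2" "Case cs \<noteq> Bang P'" "Case cs \<noteq> Ass \<Psi>"
  "Res x P \<noteq> Out M' N' P'" "Res x P \<noteq> In M' y P'" "Res x P \<noteq> Case cs" "Res x P \<noteq> Par P1 P2" "Res x P \<noteq> Bang P'" "Res x P \<noteq> Ass \<Psi>"
  "Par Q1 Q2 \<noteq> Out M' N' P'" "Par Q1 Q2 \<noteq> In M' y P'" "Par Q1 Q2 \<noteq> Case cs" "Par Q1 Q2 \<noteq> Res y P'" "Par Q1 Q2 \<noteq> Bang P'" "Par Q1 Q2 \<noteq> Ass \<Psi>"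
  "Bang Q \<noteq> Out M' N' P'" "Bang Q \<noteq> In M' y P'" "Bang Q \<noteq> Case cs" "Bang Q \<noteq> Res y P'" "Bang Q \<noteq> Par P1 P2" "Bang Q \<noteq> Ass \<Psi>"
  "Ass \<Phi> \<noteq> Out M' N' P'" "Ass \<Phi> \<noteq> In M' y P'" "Ass \<Phi> \<noteq> Case cs" "Ass \<Phi> \<noteq> Res y P'" "Ass \<Phi> \<noteq> Par P1 P2" "Ass \<Phi> \<noteq> Bang P'"
  by (rule notI, drule arg_cong[where f=ashape], simp)+

definition asize :: "('t::pt,'c::pt,'a::pt) agent \<Rightarrow> nat" where "asize P = size (rep_agent P)"

lemma asize_abs: "asize (abs_agent r) = size r"
  unfolding asize_def using ralpha_size[OF rep_abs] .

lemma asize_simps[simp]: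
  "asize (Out M N P) = Suc (asize P)"
  "asize (In M x P) = Suc (asize P)"
  "asize (Res x P) = Suc (asize P)"
  "asize (Par P Q) = Suc (asize P + asize Q)"
  "asize (Bang P) = Suc (asize P)"
  by (simp_all only: Out_def In_def Res_def Par_def Bang_def asize_abs) (simp_all add: asize_def)

lemma asize_case: "(\<phi>, P) \<in> set cs \<Longrightarrow> asize P < asize (Case cs)"
proof -
  assume "(\<phi>, P) \<in> set cs"
  hence "(\<phi>, rep_agent P) \<in> set (map (map_prod id rep_agent) cs)" by force
  hence "size (rep_agent P) < size (RCase (map (map_prod id rep_agent) cs))" by (rule size_case_lt)
  moreover have "asize (Case cs) = size (RCase (map (map_prod id rep_agent) cs))" unfolding Case_def by (rule asize_abs)
  ultimately show ?thesis unfolding asize_def[of P] by simp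
qed

lemma agent_exhaust:
  obtains (Out) M N P0 where "P = Out M N P0"
  | (In) M x P0 where "P = In M x P0"
  | (Case) cs where "P = Case cs"
  | (Res) x P0 where "P = Res x P0"
  | (Par) P1 P2 where "P = Par P1 P2"
  | (Bang) P0 where "P = Bang P0"
  | (Ass) \<Psi> where "P = Ass \<Psi>"
proof (cases "rep_agent P")
  case (ROut M N r) thus ?thesis using Out by (metis abs_rep abs_ROut)
next
  case (RIn M x r) thus ?thesis using In by (metis abs_rep abs_RIn)
next
  case (RCase cs) thus ?thesis using Case by (metis abs_rep abs_RCase)
next
  case (RRes x r) thus ?thesis using Res by (metis abs_rep abs_RRes)
next
  case (RPar r s) thus ?thesis using Par by (metis abs_rep abs_RPar)
next
  case (RBang r) thus ?thesis using Bang by (metis abs_rep abs_RBang)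
next
  case (RAss \<Psi>) thus ?thesis using Ass by (metis abs_rep abs_RAss)
qed

context nominal_params
begin

lemma swp_abs: "swp a b (abs_agent r :: ('t,'c,'a) agent) = abs_agent (rswp a b r)"
  unfolding swp_agent_def swp_ragent ralpha_abs_eq by (rule ralpha_eqvt, rule rep_abs)

lemma supp_abs: "supp (abs_agent r :: ('t,'c,'a) agent) = rfv r"
proof (rule set_eqI)
  fix a
  have fin: "finite (rfv r)" using finite_subset[OF rfv_supp rfinite] .
  show "a \<in> supp (abs_agent r) \<longleftrightarrow> a \<in> rfv r"
  proof
    assume a: "a \<in> supp (abs_agent r)"
    show "a \<in> rfv r"
    proof (rule ccontr)
      assume na: "a \<notin> rfv r"
      have "{b. swp a b (abs_agent r) \<noteq> abs_agent r} \<subseteq> rfv r"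
      proof
        fix b assume "b \<in> {b. swp a b (abs_agent r) \<noteq> abs_agent r}"
        hence "\<not> ralpha (rswp a b r) r" by (simp add: swp_abs ralpha_abs_eq)
        thus "b \<in> rfv r" using ralpha_fresh_swp[OF na] by blast
      qed
      hence "finite {b. swp a b (abs_agent r) \<noteq> abs_agent r}" using fin finite_subset by blast
      thus False using a unfolding supp_def by simp
    qed
  next
    assume a: "a \<in> rfv r"
    have "- rfv r \<subseteq> {b. swp a b (abs_agent r) \<noteq> abs_agent r}"
    proof
      fix b assume b: "b \<in> - rfv r"
      have "b \<in> rfv (rswp a b r)" using a by (auto simp: rfv_rswp intro!: image_eqI[where x=a])
      hence "\<not> ralpha (rswp a b r) r" using b ralpha_rfv by blast
      thus "b \<in> {b. swp a b (abs_agent r) \<noteq> abs_agent r}" by (simp add: swp_abs ralpha_abs_eq)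
    qed
    moreover have "infinite (- rfv r)" using fin by (simp add: Compl_eq_Diff_UNIV infinite_UNIV_nat)
    ultimately have "infinite {b. swp a b (abs_agent r) \<noteq> abs_agent r}" using finite_subset by blast
    thus "a \<in> supp (abs_agent r)" unfolding supp_def by simp
  qed
qed

lemma supp_agent: "supp (P::('t,'c,'a) agent) = rfv (rep_agent P)"
  by (metis abs_rep supp_abs)

lemma nominal_agent[simp]: "nominal_type TYPE(('t,'c,'a) agent)"
proof -
  have "\<forall>a (x::('t,'c,'a) agent). swp a a x = x"
    by (simp add: swp_agent_def rswp_id)
  moreover have "\<forall>a b (x::('t,'c,'a) agent). swp a b (swp a b x) = x"
  proof (intro allI)
    fix a b and x :: "('t,'c,'a) agent"
    have "swp a b (swp a b x) = swp a b (abs_agent (rswp a b (rep_agent x)))" by (simp add: swp_agent_def)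
    also have "\<dots> = abs_agent (rswp a b (rswp a b (rep_agent x)))" by (rule swp_abs)
    also have "\<dots> = abs_agent (rep_agent x)" by (simp only: rswp_inv)
    finally show "swp a b (swp a b x) = x" by (simp only: abs_rep)
  qed
  moreover have "\<forall>a b c d (x::('t,'c,'a) agent). swp a b (swp c d x) = swp (swap_name a b c) (swap_name a b d) (swp a b x)"
  proof (intro allI)
    fix a b c d and x :: "('t,'c,'a) agent"
    have "swp a b (swp c d x) = swp a b (abs_agent (rswp c d (rep_agent x)))" by (simp add: swp_agent_def)
    also have "\<dots> = abs_agent (rswp a b (rswp c d (rep_agent x)))" by (rule swp_abs)
    also have "\<dots> = abs_agent (rswp (swap_name a b c) (swap_name a b d) (rswp a b (rep_agent x)))" using rswp_comp[of a b c d "rep_agent x"] by (rule arg_cong)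
    also have "\<dots> = swp (swap_name a b c) (swap_name a b d) (abs_agent (rswp a b (rep_agent x)))" by (rule swp_abs[symmetric])
    also have "\<dots> = swp (swap_name a b c) (swap_name a b d) (swp a b x)" by (simp add: swp_agent_def)
    finally show "swp a b (swp c d x) = swp (swap_name a b c) (swap_name a b d) (swp a b x)" .
  qed
  moreover have "\<forall>x::('t,'c,'a) agent. finite (supp x)"
    by (simp add: supp_agent finite_subset[OF rfv_supp rfinite])
  ultimately show ?thesis unfolding nominal_type_def by blast
qed

lemma rep_swp: "ralpha (rep_agent (swp a b (P::('t,'c,'a) agent))) (rswp a b (rep_agent P))"
  unfolding swp_agent_def swp_ragent by (rule rep_abs)

lemma swp_Out[simp]: "swp a b (Out M N (P::('t,'c,'a) agent)) = Out (swp a b M) (swp a b N) (swp a b P)"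
  unfolding Out_def swp_abs ralpha_abs_eq by (simp add: al_cout al_sym[OF rep_swp])
lemma swp_In[simp]: "swp a b (In M x (P::('t,'c,'a) agent)) = In (swp a b M) (swap_name a b x) (swp a b P)"
  unfolding In_def swp_abs ralpha_abs_eq by (simp add: al_cin al_sym[OF rep_swp])
lemma swp_Res[simp]: "swp a b (Res x (P::('t,'c,'a) agent)) = Res (swap_name a b x) (swp a b P)"
  unfolding Res_def swp_abs ralpha_abs_eq by (simp add: al_cres al_sym[OF rep_swp])
lemma swp_Bang[simp]: "swp a b (Bang (P::('t,'c,'a) agent)) = Bang (swp a b P)"
  unfolding Bang_def swp_abs ralpha_abs_eq by (simp add: al_cbang al_sym[OF rep_swp])
lemma swp_Ass[simp]: "swp a b (Ass \<Psi> :: ('t,'c,'a) agent) = Ass (swp a b \<Psi>)"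
  unfolding Ass_def swp_abs by simp
lemma swp_Par[simp]: "swp a b (Par P (Q::('t,'c,'a) agent)) = Par (swp a b P) (swp a b Q)"
  unfolding Par_def swp_abs ralpha_abs_eq
  by simp (rule al_trans[OF al_cpar1[OF al_sym[OF rep_swp]] al_cpar2[OF al_sym[OF rep_swp]]])
lemma swp_Case[simp]: "swp a b (Case (cs::('c \<times> ('t,'c,'a) agent) list)) = Case (swp a b cs)"
proof -
  have "list_all2 (\<lambda>(\<phi>, p) (\<psi>, q). \<phi> = \<psi> \<and> ralpha p q) (swp a b (map (map_prod id rep_agent) cs))
     (map (map_prod id rep_agent) (swp a b cs))"
    by (induct cs) (auto intro: al_sym[OF rep_swp])
  hence "ralpha (RCase (swp a b (map (map_prod id rep_agent) cs))) (RCase (map (map_prod id rep_agent) (swp a b cs)))"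
    by (rule ralpha_case_list)
  thus ?thesis unfolding Case_def swp_abs ralpha_abs_eq rswp_case_eq .
qed

lemma swp_resl[simp]: "swp a b (resl as (P::('t,'c,'a) agent)) = resl (swp a b as) (swp a b P)"
  by (induct as) auto

lemma supp_Out[simp]: "supp (Out M N (P::('t,'c,'a) agent)) = supp M \<union> supp N \<union> supp P"
  unfolding Out_def supp_abs by (simp add: supp_agent)
lemma supp_In[simp]: "supp (In M x (P::('t,'c,'a) agent)) = supp M \<union> (supp P - {x})"
  unfolding In_def supp_abs by (simp add: supp_agent)
lemma supp_Res[simp]: "supp (Res x (P::('t,'c,'a) agent)) = supp P - {x}"
  unfolding Res_def supp_abs by (simp add: supp_agent)
lemma supp_Par[simp]: "supp (Par P (Q::('t,'c,'a) agent)) = supp P \<union> supp Q"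
  unfolding Par_def supp_abs by (simp add: supp_agent)
lemma supp_Bang[simp]: "supp (Bang (P::('t,'c,'a) agent)) = supp P"
  unfolding Bang_def supp_abs by (simp add: supp_agent)
lemma supp_Ass[simp]: "supp (Ass \<Psi> :: ('t,'c,'a) agent) = supp \<Psi>"
  unfolding Ass_def supp_abs by simp
lemma supp_Case[simp]: "supp (Case (cs::('c \<times> ('t,'c,'a) agent) list)) = (\<Union>(\<phi>, P)\<in>set cs. supp \<phi> \<union> supp P)"
  unfolding Case_def supp_abs by (force simp: supp_agent)
lemma supp_resl[simp]: "supp (resl as (P::('t,'c,'a) agent)) = supp P - set as"
  by (induct as) auto

lemma Out_eq[simp]: "(Out M N (P::('t,'c,'a) agent) = Out M' N' P') = (M = M' \<and> N = N' \<and> P = P')"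
proof
  assume "Out M N P = Out M' N' P'"
  hence "ralpha (ROut M N (rep_agent P)) (ROut M' N' (rep_agent P'))" unfolding Out_def ralpha_abs_eq .
  hence "ralpha_top (ROut M N (rep_agent P)) (ROut M' N' (rep_agent P'))" by (rule ralpha_imp_top)
  thus "M = M' \<and> N = N' \<and> P = P'" by (simp add: ralpha_abs_eq[symmetric])
qed auto

lemma Par_eq[simp]: "(Par P (Q::('t,'c,'a) agent) = Par P' Q') = (P = P' \<and> Q = Q')"
proof
  assume "Par P Q = Par P' Q'"
  hence "ralpha (RPar (rep_agent P) (rep_agent Q)) (RPar (rep_agent P') (rep_agent Q'))" unfolding Par_def ralpha_abs_eq .
  hence "ralpha_top (RPar (rep_agent P) (rep_agent Q)) (RPar (rep_agent P') (rep_agent Q'))" by (rule ralpha_imp_top)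
  thus "P = P' \<and> Q = Q'" by (simp add: ralpha_abs_eq[symmetric])
qed auto

lemma Bang_eq[simp]: "(Bang (P::('t,'c,'a) agent) = Bang P') = (P = P')"
proof
  assume "Bang P = Bang P'"
  hence "ralpha (RBang (rep_agent P)) (RBang (rep_agent P'))" unfolding Bang_def ralpha_abs_eq .
  hence "ralpha_top (RBang (rep_agent P)) (RBang (rep_agent P'))" by (rule ralpha_imp_top)
  thus "P = P'" by (simp add: ralpha_abs_eq[symmetric])
qed auto

lemma Ass_eq[simp]: "(Ass \<Psi> = (Ass \<Psi>' :: ('t,'c,'a) agent)) = (\<Psi> = \<Psi>')"
proof
  assume "Ass \<Psi> = (Ass \<Psi>' :: ('t,'c,'a) agent)"
  hence "ralpha (RAss \<Psi> :: ('t,'c,'a) ragent) (RAss \<Psi>')" unfolding Ass_def ralpha_abs_eq .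
  hence "ralpha_top (RAss \<Psi> :: ('t,'c,'a) ragent) (RAss \<Psi>')" by (rule ralpha_imp_top)
  thus "\<Psi> = \<Psi>'" by simp
qed auto

lemma Case_eq[simp]: "(Case cs = Case (cs'::('c \<times> ('t,'c,'a) agent) list)) = (cs = cs')"
proof
  assume "Case cs = Case cs'"
  hence "ralpha (RCase (map (map_prod id rep_agent) cs)) (RCase (map (map_prod id rep_agent) cs'))"
    unfolding Case_def ralpha_abs_eq .
  hence "ralpha_top (RCase (map (map_prod id rep_agent) cs)) (RCase (map (map_prod id rep_agent) cs'))" by (rule ralpha_imp_top)
  hence "list_all2 (\<lambda>x y. (\<lambda>(\<phi>, p) (\<psi>, q). \<phi> = \<psi> \<and> ralpha p q) (map_prod id rep_agent x) (map_prod id rep_agent y)) cs cs'"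
    by (simp add: list_all2_map1 list_all2_map2)
  hence "list_all2 (=) cs cs'"
    by (rule list_all2_mono) (auto simp: ralpha_abs_eq[symmetric])
  thus "cs = cs'" by (simp add: list.rel_eq)
qed auto

lemma In_eq:
  assumes "In M x (P::('t,'c,'a) agent) = In M' y Q"
  shows "M = M'" "supp P - {x} = supp Q - {y}" "\<And>c. c \<notin> supp P - {x} \<Longrightarrow> swp x c P = swp y c Q"
proof -
  have "ralpha (RIn M x (rep_agent P)) (RIn M' y (rep_agent Q))" using assms unfolding In_def ralpha_abs_eq .
  hence r: "ralpha_top (RIn M x (rep_agent P)) (RIn M' y (rep_agent Q))" by (rule ralpha_imp_top)
  thus "M = M'" by simp
  show "supp P - {x} = supp Q - {y}" using r by (simp add: supp_agent)
  fix c assume "c \<notin> supp P - {x}"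
  hence "ralpha (rswp x c (rep_agent P)) (rswp y c (rep_agent Q))" using r by (simp add: supp_agent)
  thus "swp x c P = swp y c Q" unfolding swp_agent_def swp_ragent ralpha_abs_eq .
qed

lemma Res_eq:
  assumes "Res x (P::('t,'c,'a) agent) = Res y Q"
  shows "supp P - {x} = supp Q - {y}" "\<And>c. c \<notin> supp P - {x} \<Longrightarrow> swp x c P = swp y c Q"
proof -
  have "ralpha (RRes x (rep_agent P)) (RRes y (rep_agent Q))" using assms unfolding Res_def ralpha_abs_eq .
  hence r: "ralpha_top (RRes x (rep_agent P)) (RRes y (rep_agent Q))" by (rule ralpha_imp_top)
  show "supp P - {x} = supp Q - {y}" using r by (simp add: supp_agent)
  fix c assume "c \<notin> supp P - {x}"
  hence "ralpha (rswp x c (rep_agent P)) (rswp y c (rep_agent Q))" using r by (simp add: supp_agent)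
  thus "swp x c P = swp y c Q" unfolding swp_agent_def swp_ragent ralpha_abs_eq .
qed

lemma rep_agent_ralpha_fresh: "fresh y (P::('t,'c,'a) agent) \<Longrightarrow> \<exists>r. ralpha (rep_agent P) r \<and> fresh y r"
proof -
  assume "fresh y P"
  obtain r where r: "ralpha (rep_agent P) r" "supp r \<inter> {y} \<subseteq> rfv (rep_agent P)"
    using ralpha_avoiding[of "{y}" "rep_agent P"] by auto
  thus ?thesis using \<open>fresh y P\<close> by (auto simp: fresh_def supp_agent)
qed

lemma In_alpha: "fresh y (P::('t,'c,'a) agent) \<Longrightarrow> In M x P = In M y (swp x y P)"
proof -
  assume "fresh y P"
  then obtain r where r: "ralpha (rep_agent P) r" "fresh y r" using rep_agent_ralpha_fresh by blast
  have "ralpha (RIn M x (rep_agent P)) (RIn M x r)" using r(1) by (rule al_cin)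
  moreover have "ralpha (RIn M x r) (RIn M y (swp x y r))" using r(2) by (rule al_in)
  moreover have "ralpha (rep_agent (swp x y P)) (swp x y r)"
    using al_trans[OF rep_swp ralpha_eqvt[OF r(1)]] by simp
  ultimately show ?thesis unfolding In_def ralpha_abs_eq by (blast intro: al_trans al_cin al_sym)
qed

lemma Res_alpha: "fresh y (P::('t,'c,'a) agent) \<Longrightarrow> Res x P = Res y (swp x y P)"
proof -
  assume "fresh y P"
  then obtain r where r: "ralpha (rep_agent P) r" "fresh y r" using rep_agent_ralpha_fresh by blast
  have "ralpha (RRes x (rep_agent P)) (RRes x r)" using r(1) by (rule al_cres)
  moreover have "ralpha (RRes x r) (RRes y (swp x y r))" using r(2) by (rule al_res)
  moreover have "ralpha (rep_agent (swp x y P)) (swp x y r)"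
    using al_trans[OF rep_swp ralpha_eqvt[OF r(1)]] by simp
  ultimately show ?thesis unfolding Res_def ralpha_abs_eq by (blast intro: al_trans al_cres al_sym)
qed

lemma asize_swp[simp]: "asize (swp a b (P::('t,'c,'a) agent)) = asize P"
  unfolding asize_def using ralpha_size[OF rep_swp] by simp

lemma fresh_Out[simp]: "fresh a (Out M N (P::('t,'c,'a) agent)) = (fresh a M \<and> fresh a N \<and> fresh a P)"
  by (simp add: fresh_def)
lemma fresh_In[simp]: "fresh a (In M x (P::('t,'c,'a) agent)) = (fresh a M \<and> (a = x \<or> fresh a P))"
  by (auto simp: fresh_def)
lemma fresh_Res[simp]: "fresh a (Res x (P::('t,'c,'a) agent)) = (a = x \<or> fresh a P)"
  by (auto simp: fresh_def)
lemma fresh_Par[simp]: "fresh a (Par P (Q::('t,'c,'a) agent)) = (fresh a P \<and> fresh a Q)"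
  by (simp add: fresh_def)
lemma fresh_Bang[simp]: "fresh a (Bang (P::('t,'c,'a) agent)) = fresh a P"
  by (simp add: fresh_def)
lemma fresh_Ass[simp]: "fresh a (Ass \<Psi> :: ('t,'c,'a) agent) = fresh a \<Psi>"
  by (simp add: fresh_def)
lemma fresh_Case[simp]: "fresh a (Case (cs::('c \<times> ('t,'c,'a) agent) list)) = (\<forall>(\<phi>, P)\<in>set cs. fresh a \<phi> \<and> fresh a P)"
  by (auto simp: fresh_def)
lemma fresh_resl[simp]: "fresh a (resl as (P::('t,'c,'a) agent)) = (a \<in> set as \<or> fresh a P)"
  by (auto simp: fresh_def)

end

section \<open>Substitution\<close>

lemma swp_list_length[simp]: "length (swp a b xs) = length xs"
  by (simp add: swp_list_def)
lemma swp_list_nth[simp]: "i < length xs \<Longrightarrow> swp a b xs ! i = swp a b (xs ! i)"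
  by (simp add: swp_list_def)
lemma swp_list_set: "set (swp a b xs) = swp a b ` set xs"
  by (simp add: swp_list_def)

lemma perm_swaps_single[simp]: "perm_swaps [(b, a)] X = swp b a X"
  by (simp add: perm_swaps_def)

context
  fixes sb :: "'x::pt \<Rightarrow> name list \<Rightarrow> 't::pt list \<Rightarrow> 'x"
  assumes sb_ok: "subst_ok sb" and nominal_x: "nominal_type TYPE('x)" and nominal_t: "nominal_type TYPE('t)"
begin

lemma sb_eqvt: "swp a b (sb X [x] [L]) = sb (swp a b X) [swap_name a b x] [swp a b L]"
proof -
  have "\<forall>a b X xs Ts. swp a b (sb X xs Ts) = sb (swp a b X) (swp a b xs) (swp a b Ts)"
    using sb_ok unfolding subst_ok_def by blast
  from this[rule_format, of a b X "[x]" "[L]"] show ?thesis by simp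
qed

lemma sb_id: "fresh x X \<Longrightarrow> sb X [x] [L] = X"
proof -
  assume f: "fresh x X"
  have "\<forall>X xs Ts. distinct xs \<and> length xs = length Ts \<and> fresh_star (set xs) X \<longrightarrow> sb X xs Ts = X"
    using sb_ok unfolding subst_ok_def by blast
  from this[rule_format, of "[x]" "[L]" X] show ?thesis using f by (simp add: fresh_star_def)
qed

lemma sb_alpha: "fresh x X \<Longrightarrow> sb (swp z x X) [x] [L] = sb X [z] [L]"
proof (cases "x = z")
  case True thus ?thesis by (simp only: True swp_id[OF nominal_x])
next
  case False
  assume fx: "fresh x X"
  have c3: "\<forall>X xs bs Ts. distinct xs \<and> distinct bs \<and> length xs = length Ts \<and> length bs = length xs \<and>
         fresh_star (set bs) X \<and> set bs \<inter> set xs = {}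
         \<longrightarrow> sb X xs Ts = sb (perm_swaps (zip bs xs) X) bs Ts" using sb_ok unfolding subst_ok_def by blast
  have "sb X [z] [L] = sb (perm_swaps (zip [x] [z]) X) [x] [L]"
    using c3[rule_format, of "[z]" "[x]" "[L]" X] False fx by (simp add: fresh_star_def)
  thus ?thesis using swp_sym[OF nominal_x, of x z X] by simp
qed

lemma sb_fresh_other: "fresh y L \<Longrightarrow> y \<noteq> x \<Longrightarrow> fresh y X \<Longrightarrow> fresh y (sb X [x] [L])"
proof -
  assume a: "fresh y L" "y \<noteq> x" "fresh y X"
  have "{d. swp y d (sb X [x] [L]) \<noteq> sb X [x] [L]} \<subseteq> supp X \<union> supp L \<union> {x, y}"
  proof
    fix d assume d: "d \<in> {d. swp y d (sb X [x] [L]) \<noteq> sb X [x] [L]}"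
    show "d \<in> supp X \<union> supp L \<union> {x, y}"
    proof (rule ccontr)
      assume "d \<notin> supp X \<union> supp L \<union> {x, y}"
      hence dd: "fresh d X" "fresh d L" "d \<noteq> x" "d \<noteq> y" by (auto simp: fresh_def)
      have "swp y d X = X" using fresh_swp_id[OF nominal_x] a(3) dd(1) by blast
      moreover have "swp y d L = L" using fresh_swp_id[OF nominal_t] a(1) dd(2) by blast
      moreover have "swap_name y d x = x" using a(2) dd(3) by simp
      ultimately show False using d sb_eqvt[of y d X x L] by simp
    qed
  qed
  hence "finite {d. swp y d (sb X [x] [L]) \<noteq> sb X [x] [L]}"
    by (rule finite_subset) (simp add: finite_supp[OF nominal_x] finite_supp[OF nominal_t])
  thus ?thesis by (simp add: fresh_iff_finite)
qed

lemma sb_fresh: "fresh y L \<Longrightarrow> y = x \<or> fresh y X \<Longrightarrow> fresh y (sb X [x] [L])"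
proof -
  assume a: "fresh y L" "y = x \<or> fresh y X"
  show ?thesis
  proof (cases "y = x")
    case False thus ?thesis using a sb_fresh_other by blast
  next
    case True
    obtain w where w: "w \<notin> {x}" "fresh w (X, L)"
      using obtain_fresh[OF nominal_prod[OF nominal_x nominal_t], of "{x}" "(X, L)"] by auto
    have "sb X [x] [L] = sb (swp x w X) [w] [L]"
      using sb_alpha[of w X x L] w by simp
    moreover have "fresh x (swp x w X)"
      using w fresh_eqvt2[OF nominal_x, of x x w X] by simp
    ultimately show ?thesis using sb_fresh_other[of y L w "swp x w X"] a True w by auto
  qed
qed

end

text \<open>The parts of a psi-calculus that the correspondence of the two semantics relies on.\<close>
locale nominal_psi = nominal_params "TYPE('t::pt \<times> 'c::pt \<times> 'a::pt)" +
  fixes S :: "('t::pt, 'c::pt, 'a::pt) psi"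
  assumes chan_eq_eqvt[simp]: "swp a b (chan_eq S M N) = chan_eq S (swp a b M) (swp a b N)"
    and acomp_eqvt[simp]: "swp a b (acomp S \<Psi> \<Psi>') = acomp S (swp a b \<Psi>) (swp a b \<Psi>')"
    and aunit_eqvt[simp]: "swp a b (aunit S) = aunit S"
    and entails_eqvt: "entails S \<Psi> \<phi> \<Longrightarrow> entails S (swp a b \<Psi>) (swp a b \<phi>)"
    and subT_ok: "subst_ok (subT S)" and subC_ok: "subst_ok (subC S)" and subA_ok: "subst_ok (subA S)"

lemma psi_calculus_imp_nominal_psi: "psi_calculus S \<Longrightarrow> nominal_psi S"
  unfolding psi_calculus_def by unfold_locales (elim conjE; (assumption | blast))+

context nominal_psi
begin

lemmas subT_eqvt = sb_eqvt[OF subT_ok nominal_terms nominal_terms]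
  and subT_id = sb_id[OF subT_ok nominal_terms nominal_terms]
  and subT_alpha = sb_alpha[OF subT_ok nominal_terms nominal_terms]
  and subT_fresh = sb_fresh[OF subT_ok nominal_terms nominal_terms]
lemmas subC_eqvt = sb_eqvt[OF subC_ok nominal_conditions nominal_terms]
  and subC_id = sb_id[OF subC_ok nominal_conditions nominal_terms]
  and subC_alpha = sb_alpha[OF subC_ok nominal_conditions nominal_terms]
  and subC_fresh = sb_fresh[OF subC_ok nominal_conditions nominal_terms]
lemmas subA_eqvt = sb_eqvt[OF subA_ok nominal_assertions nominal_terms]
  and subA_id = sb_id[OF subA_ok nominal_assertions nominal_terms]
  and subA_alpha = sb_alpha[OF subA_ok nominal_assertions nominal_terms]
  and subA_fresh = sb_fresh[OF subA_ok nominal_assertions nominal_terms]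

lemma asubst_eqvt: "asubst S P x L P' \<Longrightarrow> asubst S (swp a b P) (swap_name a b x) (swp a b L) (swp a b P')"
proof (induction rule: asubst.induct)
  case (1 P x L P' M N)
  thus ?case by (simp add: subT_eqvt asubst.intros(1))
next
  case (2 P x L P' y M)
  have "swap_name a b y \<noteq> swap_name a b x" using 2 by simp
  moreover have "fresh (swap_name a b y) (swp a b L)" using 2 by simp
  ultimately show ?case using 2 by (simp add: subT_eqvt asubst.intros(2))
next
  case (3 cs' cs x L)
  show ?case
    by (simp, rule asubst.intros(3)) (use 3 in \<open>simp_all add: subC_eqvt\<close>)
next
  case (4 P x L P' y)
  have "swap_name a b y \<noteq> swap_name a b x" using 4 by simp
  moreover have "fresh (swap_name a b y) (swp a b L)" using 4 by simp
  ultimately show ?case using 4 by (simp add: asubst.intros(4))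
next
  case (5 P x L P' Q Q')
  thus ?case by (simp add: asubst.intros(5))
next
  case (6 P x L P')
  thus ?case by (simp add: asubst.intros(6))
next
  case (7 \<Psi> x L)
  thus ?case by (simp add: subA_eqvt asubst.intros(7))
qed

lemma asubst_ex: "\<exists>P'. asubst S P x L P'"
proof (induction "asize P" arbitrary: P rule: less_induct)
  case less
  show ?case
  proof (cases P rule: agent_exhaust)
    case (Out M N P0)
    then obtain P0' where "asubst S P0 x L P0'" using less by auto
    thus ?thesis using Out by (blast intro: asubst.intros)
  next
    case (In M y P0)
    obtain w where w: "w \<notin> {x}" "fresh w (L, P0)"
      using obtain_fresh[OF nominal_prod[OF nominal_terms nominal_agent], of "{x}" "(L, P0)"] by auto
    have e: "P = In M w (swp y w P0)" using In In_alpha w by simp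
    obtain P0' where "asubst S (swp y w P0) x L P0'" using less[of "swp y w P0"] In by auto
    hence "asubst S (In M w (swp y w P0)) x L (In (subT S M [x] [L]) w P0')" using w by (intro asubst.intros(2)) auto
    thus ?thesis using e by blast
  next
    case (Case cs)
    have ex: "\<And>\<phi> Q. (\<phi>, Q) \<in> set cs \<Longrightarrow> \<exists>Q'. asubst S Q x L Q'"
      using less Case asize_case by blast
    define cs' where "cs' = map (\<lambda>(\<phi>, Q). (subC S \<phi> [x] [L], SOME Q'. asubst S Q x L Q')) cs"
    have "asubst S (Case cs) x L (Case cs')"
    proof (rule asubst.intros(3))
      show "length cs' = length cs" by (simp add: cs'_def)
      show "\<forall>i<length cs. fst (cs' ! i) = subC S (fst (cs ! i)) [x] [L] \<and> asubst S (snd (cs ! i)) x L (snd (cs' ! i))"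
      proof (intro allI impI)
        fix i assume i: "i < length cs"
        obtain \<phi> Q where q: "cs ! i = (\<phi>, Q)" by (cases "cs ! i")
        have "(\<phi>, Q) \<in> set cs" using i q by (metis nth_mem)
        hence "asubst S Q x L (SOME Q'. asubst S Q x L Q')" using ex by (blast intro: someI_ex)
        thus "fst (cs' ! i) = subC S (fst (cs ! i)) [x] [L] \<and> asubst S (snd (cs ! i)) x L (snd (cs' ! i))"
          using i q by (simp add: cs'_def)
      qed
    qed
    thus ?thesis using Case by blast
  next
    case (Res y P0)
    obtain w where w: "w \<notin> {x}" "fresh w (L, P0)"
      using obtain_fresh[OF nominal_prod[OF nominal_terms nominal_agent], of "{x}" "(L, P0)"] by auto
    have e: "P = Res w (swp y w P0)" using Res Res_alpha w by simp
    obtain P0' where "asubst S (swp y w P0) x L P0'" using less[of "swp y w P0"] Res by auto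
    hence "asubst S (Res w (swp y w P0)) x L (Res w P0')" using w by (intro asubst.intros(4)) auto
    thus ?thesis using e by blast
  next
    case (Par P1 P2)
    obtain P1' where "asubst S P1 x L P1'" using less[of P1] Par by auto
    moreover obtain P2' where "asubst S P2 x L P2'" using less[of P2] Par by auto
    ultimately show ?thesis using Par by (blast intro: asubst.intros(5))
  next
    case (Bang P0)
    obtain P0' where "asubst S P0 x L P0'" using less Bang by auto
    thus ?thesis using Bang by (blast intro: asubst.intros(6))
  next
    case (Ass \<Psi>)
    thus ?thesis by (blast intro: asubst.intros(7))
  qed
qed

lemma asubst_swp_fresh:
  assumes "asubst S P x L P'" "fresh a L" "fresh b L" "a \<noteq> x" "b \<noteq> x"
  shows "asubst S (swp a b P) x L (swp a b P')"
proof -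
  have "swp a b L = L" using assms fresh_swp_id[OF nominal_terms] by blast
  thus ?thesis using asubst_eqvt[OF assms(1), of a b] assms by simp
qed

lemma asubst_Out_inv: "asubst S (Out M N P) x L R \<Longrightarrow> \<exists>P'. R = Out (subT S M [x] [L]) (subT S N [x] [L]) P' \<and> asubst S P x L P'"
  by (erule asubst.cases; simp)

lemma asubst_In_inv: "asubst S (In M y P) x L R \<Longrightarrow>
   \<exists>y2 Q Q'. In M y P = In M y2 Q \<and> R = In (subT S M [x] [L]) y2 Q' \<and> asubst S Q x L Q' \<and> y2 \<noteq> x \<and> fresh y2 L"
  apply (erule asubst.cases; simp)
  apply (frule In_eq(1))
  apply blast
  done

lemma asubst_Res_inv: "asubst S (Res y P) x L R \<Longrightarrow>
   \<exists>y2 Q Q'. Res y P = Res y2 Q \<and> R = Res y2 Q' \<and> asubst S Q x L Q' \<and> y2 \<noteq> x \<and> fresh y2 L"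
  by (erule asubst.cases; simp) blast

lemma asubst_Case_inv: "asubst S (Case cs) x L R \<Longrightarrow>
   \<exists>cs'. R = Case cs' \<and> length cs' = length cs \<and> (\<forall>i<length cs. fst (cs' ! i) = subC S (fst (cs ! i)) [x] [L] \<and> asubst S (snd (cs ! i)) x L (snd (cs' ! i)))"
  by (erule asubst.cases; simp)

lemma asubst_Par_inv: "asubst S (Par P Q) x L R \<Longrightarrow> \<exists>P' Q'. R = Par P' Q' \<and> asubst S P x L P' \<and> asubst S Q x L Q'"
  by (erule asubst.cases; simp)

lemma asubst_Bang_inv: "asubst S (Bang P) x L R \<Longrightarrow> \<exists>P'. R = Bang P' \<and> asubst S P x L P'"
  by (erule asubst.cases; simp)

lemma asubst_Ass_inv: "asubst S (Ass \<Psi>) x L R \<Longrightarrow> R = Ass (subA S \<Psi> [x] [L])"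
  by (erule asubst.cases; simp)

lemma asubst_unique: "asubst S P x L P1 \<Longrightarrow> asubst S P x L P2 \<Longrightarrow> P1 = P2"
proof (induction arbitrary: P2 rule: asubst.induct)
  case (1 P x L P' M N)
  obtain Q' where "P2 = Out (subT S M [x] [L]) (subT S N [x] [L]) Q'" "asubst S P x L Q'"
    using asubst_Out_inv[OF 1(3)] by blast
  thus ?case using "1.IH" by simp
next
  case (2 P x L P' y M)
  obtain y2 Q Q' where h: "In M y P = In M y2 Q" "P2 = In (subT S M [x] [L]) y2 Q'" "asubst S Q x L Q'" "y2 \<noteq> x" "fresh y2 L"
    using asubst_In_inv[OF 2(5)] by blast
  obtain c where c: "c \<notin> {x, y, y2}" "fresh c (L, P, Q, P', Q')"
    using obtain_fresh[of "{x, y, y2}" "(L, P, Q, P', Q')"] by auto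
  have e: "swp y c P = swp y2 c Q" using In_eq(3)[OF h(1)] c by (auto simp: fresh_def)
  have "asubst S (swp y2 c Q) x L (swp y2 c Q')" using asubst_swp_fresh[OF h(3)] h c by auto
  hence "asubst S (swp y c P) x L (swp y2 c Q')" using e by simp
  hence "asubst S (swp y c (swp y c P)) x L (swp y c (swp y2 c Q'))"
    by (rule asubst_swp_fresh) (use c \<open>fresh y L\<close> \<open>y \<noteq> x\<close> in auto)
  hence "asubst S P x L (swp y c (swp y2 c Q'))" by simp
  hence P': "P' = swp y c (swp y2 c Q')" using "2.IH" by blast
  have "In (subT S M [x] [L]) y P' = In (subT S M [x] [L]) c (swp y c P')" using c by (intro In_alpha) auto
  also have "\<dots> = In (subT S M [x] [L]) c (swp y2 c Q')" using P' by simp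
  also have "\<dots> = In (subT S M [x] [L]) y2 Q'" using c by (intro In_alpha[symmetric]) auto
  finally show ?case using h by simp
next
  case (3 cs' cs x L)
  obtain cs2 where h: "P2 = Case cs2" "length cs2 = length cs"
    "\<forall>i<length cs. fst (cs2 ! i) = subC S (fst (cs ! i)) [x] [L] \<and> asubst S (snd (cs ! i)) x L (snd (cs2 ! i))"
    using asubst_Case_inv[OF 3(3)] by blast
  have "cs' = cs2"
  proof (rule nth_equalityI)
    show "length cs' = length cs2" using h 3 by simp
    fix i assume "i < length cs'"
    hence i: "i < length cs" using 3 by simp
    have "fst (cs' ! i) = fst (cs2 ! i)" using h(3) 3(2) i by simp
    moreover have "snd (cs' ! i) = snd (cs2 ! i)" using h(3) 3(2) i by blast
    ultimately show "cs' ! i = cs2 ! i" by (rule prod_eqI)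
  qed
  thus ?case using h by simp
next
  case (4 P x L P' y)
  obtain y2 Q Q' where h: "Res y P = Res y2 Q" "P2 = Res y2 Q'" "asubst S Q x L Q'" "y2 \<noteq> x" "fresh y2 L"
    using asubst_Res_inv[OF 4(5)] by blast
  obtain c where c: "c \<notin> {x, y, y2}" "fresh c (L, P, Q, P', Q')"
    using obtain_fresh[of "{x, y, y2}" "(L, P, Q, P', Q')"] by auto
  have e: "swp y c P = swp y2 c Q" using Res_eq(2)[OF h(1)] c by (auto simp: fresh_def)
  have "asubst S (swp y2 c Q) x L (swp y2 c Q')" using asubst_swp_fresh[OF h(3)] h c by auto
  hence "asubst S (swp y c P) x L (swp y2 c Q')" using e by simp
  hence "asubst S (swp y c (swp y c P)) x L (swp y c (swp y2 c Q'))"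
    by (rule asubst_swp_fresh) (use c \<open>fresh y L\<close> \<open>y \<noteq> x\<close> in auto)
  hence "asubst S P x L (swp y c (swp y2 c Q'))" by simp
  hence P': "P' = swp y c (swp y2 c Q')" using "4.IH" by blast
  have "Res y P' = Res c (swp y c P')" using c by (intro Res_alpha) auto
  also have "\<dots> = Res c (swp y2 c Q')" using P' by simp
  also have "\<dots> = Res y2 Q'" using c by (intro Res_alpha[symmetric]) auto
  finally show ?case using h by simp
next
  case (5 P x L P' Q Q')
  obtain P'' Q'' where "P2 = Par P'' Q''" "asubst S P x L P''" "asubst S Q x L Q''"
    using asubst_Par_inv[OF 5(5)] by blast
  thus ?case using "5.IH" by simp
next
  case (6 P x L P')
  obtain P'' where "P2 = Bang P''" "asubst S P x L P''"
    using asubst_Bang_inv[OF 6(3)] by blast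
  thus ?case using "6.IH" by simp
next
  case (7 \<Psi> x L)
  thus ?case using asubst_Ass_inv by simp
qed

lemma subst_asubst: "asubst S P x L (subst_agent S P x L)"
  unfolding subst_agent_def
  by (rule theI') (use asubst_ex asubst_unique in blast)

lemma subst_eq: "asubst S P x L P' \<Longrightarrow> subst_agent S P x L = P'"
  using subst_asubst asubst_unique by blast

lemma subst_Out[simp]: "subst_agent S (Out M N P) x L = Out (subT S M [x] [L]) (subT S N [x] [L]) (subst_agent S P x L)"
  by (rule subst_eq, rule asubst.intros(1), rule subst_asubst)
lemma subst_In: "y \<noteq> x \<Longrightarrow> fresh y L \<Longrightarrow> subst_agent S (In M y P) x L = In (subT S M [x] [L]) y (subst_agent S P x L)"
  by (rule subst_eq, rule asubst.intros(2), rule subst_asubst)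
lemma subst_Res: "y \<noteq> x \<Longrightarrow> fresh y L \<Longrightarrow> subst_agent S (Res y P) x L = Res y (subst_agent S P x L)"
  by (rule subst_eq, rule asubst.intros(4), rule subst_asubst)
lemma subst_Par[simp]: "subst_agent S (Par P Q) x L = Par (subst_agent S P x L) (subst_agent S Q x L)"
  by (rule subst_eq, rule asubst.intros(5), rule subst_asubst, rule subst_asubst)
lemma subst_Bang[simp]: "subst_agent S (Bang P) x L = Bang (subst_agent S P x L)"
  by (rule subst_eq, rule asubst.intros(6), rule subst_asubst)
lemma subst_Ass[simp]: "subst_agent S (Ass \<Psi>) x L = Ass (subA S \<Psi> [x] [L])"
  by (rule subst_eq, rule asubst.intros(7))
lemma subst_Case: "subst_agent S (Case cs) x L = Case (map (\<lambda>(\<phi>, P). (subC S \<phi> [x] [L], subst_agent S P x L)) cs)"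
  by (rule subst_eq, rule asubst.intros(3)) (auto simp: split_def subst_asubst)

lemma subst_eqvt: "swp a b (subst_agent S P x L) = subst_agent S (swp a b P) (swap_name a b x) (swp a b L)"
  by (rule subst_eq[symmetric], rule asubst_eqvt, rule subst_asubst)

lemma asubst_fresh: "asubst S P x L P' \<Longrightarrow> fresh y L \<Longrightarrow> y = x \<or> fresh y P \<Longrightarrow> fresh y P'"
proof (induction rule: asubst.induct)
  case (1 P x L P' M N) thus ?case using subT_fresh by auto
next
  case (2 P x L P' y' M) thus ?case using subT_fresh by auto
next
  case (3 cs' cs x L)
  show ?case unfolding fresh_Case
  proof (intro ballI, clarify)
    fix \<phi> Q assume m: "(\<phi>, Q) \<in> set cs'"
    then obtain i where i: "i < length cs'" "cs' ! i = (\<phi>, Q)" by (auto simp: in_set_conv_nth)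
    have i2: "i < length cs" using i 3 by simp
    have mem: "cs ! i \<in> set cs" using i2 by simp
    have f: "y = x \<or> (fresh y (fst (cs ! i)) \<and> fresh y (snd (cs ! i)))"
      using 3(4) mem by (cases "cs ! i") (auto simp: fresh_Case)
    have "\<phi> = subC S (fst (cs ! i)) [x] [L]" using 3(2) i i2 by (metis fst_conv)
    hence "fresh y \<phi>" using subC_fresh[OF 3(3)] f by blast
    moreover have "fresh y Q" using 3(2) i i2 f 3(3) by (metis snd_conv)
    ultimately show "fresh y \<phi> \<and> fresh y Q" by simp
  qed
next
  case (4 P x L P' y') thus ?case by auto
next
  case (5 P x L P' Q Q') thus ?case by auto
next
  case (6 P x L P') thus ?case by auto
next
  case (7 \<Psi> x L) thus ?case using subA_fresh by auto
qed

lemma subst_fresh: "fresh y L \<Longrightarrow> y = x \<or> fresh y P \<Longrightarrow> fresh y (subst_agent S P x L)"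
  using asubst_fresh[OF subst_asubst] by blast

lemma asubst_id: "asubst S P x L P' \<Longrightarrow> fresh x P \<Longrightarrow> P' = P"
proof (induction rule: asubst.induct)
  case (3 cs' cs x L)
  have "cs' = cs"
  proof (rule nth_equalityI)
    show "length cs' = length cs" using 3 by simp
    fix i assume "i < length cs'"
    hence i: "i < length cs" using 3 by simp
    have mem: "cs ! i \<in> set cs" using i by simp
    have f: "fresh x (fst (cs ! i))" "fresh x (snd (cs ! i))"
      using 3(3) mem by (cases "cs ! i"; auto simp: fresh_Case)+
    have "fst (cs' ! i) = fst (cs ! i)" using 3(2) i f subC_id by metis
    moreover have "snd (cs' ! i) = snd (cs ! i)" using 3(2) i f by blast
    ultimately show "cs' ! i = cs ! i" by (rule prod_eqI)
  qed
  thus ?case by simp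
qed (auto simp: subT_id subA_id)

lemma subst_id: "fresh x P \<Longrightarrow> subst_agent S P x L = P"
  using asubst_id[OF subst_asubst] by blast

lemma subst_alpha_distinct: "x \<noteq> z \<Longrightarrow> fresh x P \<Longrightarrow> subst_agent S (swp z x P) x L = subst_agent S P z L"
proof (induction "asize P" arbitrary: P rule: less_induct)
  case less
  show ?case
  proof (cases P rule: agent_exhaust)
    case (Out M N P0)
    thus ?thesis using less by (auto simp: subT_alpha)
  next
    case (In M y P0)
    obtain w where w: "w \<notin> {x, z}" "fresh w (L, P0)"
      using obtain_fresh[of "{x, z}" "(L, P0)"] by auto
    define P1 where "P1 = swp y w P0"
    have e: "P = In M w P1" using In In_alpha w P1_def by simp
    have fx: "fresh x M" "fresh x P1" using less(3) e w by auto
    have "subst_agent S (swp z x P) x L = subst_agent S (In (swp z x M) w (swp z x P1)) x L"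
      using e w by simp
    also have "\<dots> = In (subT S (swp z x M) [x] [L]) w (subst_agent S (swp z x P1) x L)"
      using w by (intro subst_In) auto
    also have "\<dots> = In (subT S M [z] [L]) w (subst_agent S P1 z L)"
      using fx less(1)[of P1] less(2) e subT_alpha by simp
    also have "\<dots> = subst_agent S P z L" using e w by (simp add: subst_In)
    finally show ?thesis .
  next
    case (Case cs)
    have "\<And>\<phi> Q. (\<phi>, Q) \<in> set cs \<Longrightarrow> subC S (swp z x \<phi>) [x] [L] = subC S \<phi> [z] [L] \<and> subst_agent S (swp z x Q) x L = subst_agent S Q z L"
    proof -
      fix \<phi> Q assume m: "(\<phi>, Q) \<in> set cs"
      have "fresh x \<phi>" "fresh x Q" using less(3) Case m by (auto simp: fresh_Case)
      thus "subC S (swp z x \<phi>) [x] [L] = subC S \<phi> [z] [L] \<and> subst_agent S (swp z x Q) x L = subst_agent S Q z L"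
        using less(1)[of Q] less(2) asize_case[OF m] Case subC_alpha by auto
    qed
    thus ?thesis using Case by (auto simp: subst_Case swp_list_def)
  next
    case (Res y P0)
    obtain w where w: "w \<notin> {x, z}" "fresh w (L, P0)"
      using obtain_fresh[of "{x, z}" "(L, P0)"] by auto
    define P1 where "P1 = swp y w P0"
    have e: "P = Res w P1" using Res Res_alpha w P1_def by simp
    have fx: "fresh x P1" using less(3) e w by auto
    have "subst_agent S (swp z x P) x L = subst_agent S (Res w (swp z x P1)) x L"
      using e w by simp
    also have "\<dots> = Res w (subst_agent S (swp z x P1) x L)"
      using w by (intro subst_Res) auto
    also have "\<dots> = Res w (subst_agent S P1 z L)"
      using fx less(1)[of P1] less(2) e by simp
    also have "\<dots> = subst_agent S P z L" using e w by (simp add: subst_Res)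
    finally show ?thesis .
  next
    case (Par P1 P2)
    thus ?thesis using less(1)[of P1] less(1)[of P2] less(2,3) by auto
  next
    case (Bang P0)
    thus ?thesis using less by auto
  next
    case (Ass \<Psi>)
    thus ?thesis using less by (auto simp: subA_alpha)
  qed
qed

lemma subst_alpha: "fresh x P \<Longrightarrow> subst_agent S (swp z x P) x L = subst_agent S P z L"
  by (cases "x = z") (auto simp: subst_alpha_distinct)

lemma rframe_eqvt: "rframe S r bs \<Psi> \<Longrightarrow> rframe S (rswp a b r) (swp a b bs) (swp a b \<Psi>)"
proof (induction rule: rframe.induct)
  case (7 P bs1 \<Psi>1 Q bs2 \<Psi>2)
  have "fresh_star (set (swp a b bs1)) (rswp a b Q)" "fresh_star (set (swp a b bs2)) (rswp a b P)"
    using 7 fresh_star_eqvt[OF nominal_ragent] by (simp_all add: set_swp_names del: set_map)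
  moreover have "set (swp a b bs1) \<inter> set (swp a b bs2) = {}" using 7 by (auto simp: set_swp_names)
  ultimately show ?case using 7 by (simp add: rframe.intros(7))
qed (auto intro: rframe.intros simp: rswp_case_eq)

lemma frame_of_eqvt: "frame_of S P bs \<Psi> \<Longrightarrow> frame_of S (swp a b P) (swp a b bs) (swp a b \<Psi>)"
  unfolding frame_of_def using rframe_eqvt swp_abs by metis

lemma rframe_fresh: "rframe S r bs \<Psi> \<Longrightarrow> set bs \<inter> rfv r = {}"
proof (induction rule: rframe.induct)
  case (7 P bs1 \<Psi>1 Q bs2 \<Psi>2)
  have "set bs1 \<inter> rfv Q = {}" using 7(3) rfv_supp by (auto simp: fresh_star_supp)
  moreover have "set bs2 \<inter> rfv P = {}" using 7(4) rfv_supp by (auto simp: fresh_star_supp)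
  ultimately show ?case using 7 by auto
qed auto

lemma frame_of_fresh: "frame_of S P bs \<Psi> \<Longrightarrow> fresh_star (set bs) P"
  unfolding frame_of_def fresh_star_supp using rframe_fresh supp_abs by metis

lemma frame_rename:
  assumes "frame_of S P bs \<Psi>" "b \<in> set bs" "fresh c P"
  shows "frame_of S P (swp b c bs) (swp b c \<Psi>)"
proof -
  have "fresh b P" using frame_of_fresh[OF assms(1)] assms(2) by (simp add: fresh_star_def)
  hence "swp b c P = P" using assms(3) fresh_swp_id[OF nominal_agent] by blast
  thus ?thesis using frame_of_eqvt[OF assms(1), of b c] by simp
qed

lemma ltrans_eqvt: "ltrans S \<Psi> P \<alpha> P' \<Longrightarrow> ltrans S (swp a b \<Psi>) (swp a b P) (swp a b \<alpha>) (swp a b P')"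
proof (induction rule: ltrans.induct)
  case (l_in \<Psi> M K x P)
  show ?case using entails_eqvt[OF l_in, of a b] by (simp add: ltrans.l_in)
next
  case (l_out \<Psi> M K N P)
  show ?case using entails_eqvt[OF l_out, of a b] by (simp add: ltrans.l_out)
next
  case (l_case \<Psi> P \<alpha> P' \<phi> cs)
  have "(swp a b \<phi>, swp a b P) \<in> set (swp a b cs)" using l_case.hyps(2) by (force simp: swp_list_set)
  thus ?case using l_case.IH entails_eqvt[OF l_case.hyps(3), of a b] by (simp add: ltrans.l_case)
next
  case (l_com1 P bsP \<Psi>P Q bsQ \<Psi>Q \<Psi> M K as N P' x Q')
  have 1: "frame_of S (swp a b P) (swp a b bsP) (swp a b \<Psi>P)" using l_com1.hyps(1) by (rule frame_of_eqvt)
  have 2: "frame_of S (swp a b Q) (swp a b bsQ) (swp a b \<Psi>Q)" using l_com1.hyps(2) by (rule frame_of_eqvt)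
  have 3: "fresh_star (set (swp a b bsP)) (swp a b \<Psi>, swp a b \<Psi>Q, swp a b P, swp a b Q, swp a b M, swp a b bsQ)"
    using fresh_star_set_eqvt[OF _ l_com1.hyps(3), of a b] by simp
  have 4: "fresh_star (set (swp a b bsQ)) (swp a b \<Psi>, swp a b \<Psi>P, swp a b P, swp a b Q, swp a b K)"
    using fresh_star_set_eqvt[OF _ l_com1.hyps(4), of a b] by simp
  have 5: "ltrans S (acomp S (swp a b \<Psi>Q) (swp a b \<Psi>)) (swp a b P) (AOut (swp a b M) (swp a b as) (swp a b N)) (swp a b P')"
    using l_com1.IH(1) by simp
  have 6: "ltrans S (acomp S (swp a b \<Psi>P) (swp a b \<Psi>)) (swp a b Q) (AIn (swp a b K) (swap_name a b x)) (swp a b Q')"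
    using l_com1.IH(2) by simp
  have 7: "entails S (acomp S (acomp S (swp a b \<Psi>) (swp a b \<Psi>P)) (swp a b \<Psi>Q)) (chan_eq S (swp a b M) (swp a b K))"
    using entails_eqvt[OF l_com1.hyps(7), of a b] by simp
  have 8: "fresh_star (set (swp a b as)) (swp a b Q)" using fresh_star_set_eqvt[OF _ l_com1.hyps(8), of a b] by simp
  from ltrans.l_com1[OF 1 2 3 4 5 6 7 8] show ?case by (simp add: subst_eqvt)
next
  case (l_com2 P bsP \<Psi>P Q bsQ \<Psi>Q \<Psi> M K x P' as N Q')
  have 1: "frame_of S (swp a b P) (swp a b bsP) (swp a b \<Psi>P)" using l_com2.hyps(1) by (rule frame_of_eqvt)
  have 2: "frame_of S (swp a b Q) (swp a b bsQ) (swp a b \<Psi>Q)" using l_com2.hyps(2) by (rule frame_of_eqvt)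
  have 3: "fresh_star (set (swp a b bsP)) (swp a b \<Psi>, swp a b \<Psi>Q, swp a b P, swp a b Q, swp a b M, swp a b bsQ)"
    using fresh_star_set_eqvt[OF _ l_com2.hyps(3), of a b] by simp
  have 4: "fresh_star (set (swp a b bsQ)) (swp a b \<Psi>, swp a b \<Psi>P, swp a b P, swp a b Q, swp a b K)"
    using fresh_star_set_eqvt[OF _ l_com2.hyps(4), of a b] by simp
  have 5: "ltrans S (acomp S (swp a b \<Psi>Q) (swp a b \<Psi>)) (swp a b P) (AIn (swp a b M) (swap_name a b x)) (swp a b P')"
    using l_com2.IH(1) by simp
  have 6: "ltrans S (acomp S (swp a b \<Psi>P) (swp a b \<Psi>)) (swp a b Q) (AOut (swp a b K) (swp a b as) (swp a b N)) (swp a b Q')"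
    using l_com2.IH(2) by simp
  have 7: "entails S (acomp S (acomp S (swp a b \<Psi>) (swp a b \<Psi>P)) (swp a b \<Psi>Q)) (chan_eq S (swp a b M) (swp a b K))"
    using entails_eqvt[OF l_com2.hyps(7), of a b] by simp
  have 8: "fresh_star (set (swp a b as)) (swp a b P)" using fresh_star_set_eqvt[OF _ l_com2.hyps(8), of a b] by simp
  from ltrans.l_com2[OF 1 2 3 4 5 6 7 8] show ?case by (simp add: subst_eqvt)
next
  case (l_par1 Q bsQ \<Psi>Q \<Psi> P \<alpha> P')
  have 1: "frame_of S (swp a b Q) (swp a b bsQ) (swp a b \<Psi>Q)" using l_par1.hyps(1) by (rule frame_of_eqvt)
  have 2: "fresh_star (set (swp a b bsQ)) (swp a b \<Psi>, swp a b P, swp a b \<alpha>)"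
    using fresh_star_set_eqvt[OF _ l_par1.hyps(2), of a b] by simp
  have 3: "ltrans S (acomp S (swp a b \<Psi>Q) (swp a b \<Psi>)) (swp a b P) (swp a b \<alpha>) (swp a b P')"
    using l_par1.IH by simp
  have 4: "fresh_star (bn (swp a b \<alpha>)) (swp a b Q)" using fresh_star_bn_eqvt[OF _ l_par1.hyps(4), of a b] by simp
  from ltrans.l_par1[OF 1 2 3 4] show ?case by simp
next
  case (l_par2 P bsP \<Psi>P \<Psi> Q \<alpha> Q')
  have 1: "frame_of S (swp a b P) (swp a b bsP) (swp a b \<Psi>P)" using l_par2.hyps(1) by (rule frame_of_eqvt)
  have 2: "fresh_star (set (swp a b bsP)) (swp a b \<Psi>, swp a b Q, swp a b \<alpha>)"
    using fresh_star_set_eqvt[OF _ l_par2.hyps(2), of a b] by simp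
  have 3: "ltrans S (acomp S (swp a b \<Psi>P) (swp a b \<Psi>)) (swp a b Q) (swp a b \<alpha>) (swp a b Q')"
    using l_par2.IH by simp
  have 4: "fresh_star (bn (swp a b \<alpha>)) (swp a b P)" using fresh_star_bn_eqvt[OF _ l_par2.hyps(4), of a b] by simp
  from ltrans.l_par2[OF 1 2 3 4] show ?case by simp
next
  case (l_scope \<Psi> P \<alpha> P' d)
  have "fresh (swap_name a b d) (swp a b \<alpha>)" "fresh (swap_name a b d) (swp a b \<Psi>)" using l_scope by simp_all
  from ltrans.l_scope[OF l_scope.IH this] show ?case by simp
next
  case (l_open \<Psi> P M as cs N P' d)
  have 1: "ltrans S (swp a b \<Psi>) (swp a b P) (AOut (swp a b M) (swp a b as @ swp a b cs) (swp a b N)) (swp a b P')"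
    using l_open.IH by simp
  have 2: "swap_name a b d \<notin> set (swp a b as)" "swap_name a b d \<notin> set (swp a b cs)"
    using l_open by (simp_all add: set_swp_names del: set_map)
  have 3: "fresh (swap_name a b d) (swp a b \<Psi>)" "fresh (swap_name a b d) (swp a b M)" using l_open by simp_all
  have 4: "swap_name a b d \<in> supp (swp a b N)" using l_open.hyps(6) supp_eqvt[OF nominal_terms] by simp
  from ltrans.l_open[OF 1 2 3 4] show ?case by simp
next
  case (l_rep \<Psi> P \<alpha> P')
  thus ?case by (simp add: ltrans.l_rep)
qed

lemma etrans_eqvt: "etrans S \<Psi> P \<alpha> P' \<Longrightarrow> etrans S (swp a b \<Psi>) (swp a b P) (swp a b \<alpha>) (swp a b P')"
proof (induction rule: etrans.induct)
  case (e_in \<Psi> M K x P N)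
  show ?case using entails_eqvt[OF e_in, of a b] by (simp add: etrans.e_in subst_eqvt)
next
  case (e_out \<Psi> M K N P)
  show ?case using entails_eqvt[OF e_out, of a b] by (simp add: etrans.e_out)
next
  case (e_case \<Psi> P \<alpha> P' \<phi> cs)
  have "(swp a b \<phi>, swp a b P) \<in> set (swp a b cs)" using e_case.hyps(2) by (force simp: swp_list_set)
  thus ?case using e_case.IH entails_eqvt[OF e_case.hyps(3), of a b] by (simp add: etrans.e_case)
next
  case (e_com1 P bsP \<Psi>P Q bsQ \<Psi>Q \<Psi> M K as N P' Q')
  have 1: "frame_of S (swp a b P) (swp a b bsP) (swp a b \<Psi>P)" using e_com1.hyps(1) by (rule frame_of_eqvt)
  have 2: "frame_of S (swp a b Q) (swp a b bsQ) (swp a b \<Psi>Q)" using e_com1.hyps(2) by (rule frame_of_eqvt)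
  have 3: "fresh_star (set (swp a b bsP)) (swp a b \<Psi>, swp a b \<Psi>Q, swp a b P, swp a b Q, swp a b M, swp a b bsQ)"
    using fresh_star_set_eqvt[OF _ e_com1.hyps(3), of a b] by simp
  have 4: "fresh_star (set (swp a b bsQ)) (swp a b \<Psi>, swp a b \<Psi>P, swp a b P, swp a b Q, swp a b K)"
    using fresh_star_set_eqvt[OF _ e_com1.hyps(4), of a b] by simp
  have 5: "etrans S (acomp S (swp a b \<Psi>Q) (swp a b \<Psi>)) (swp a b P) (AOut (swp a b M) (swp a b as) (swp a b N)) (swp a b P')"
    using e_com1.IH(1) by simp
  have 6: "etrans S (acomp S (swp a b \<Psi>P) (swp a b \<Psi>)) (swp a b Q) (AInE (swp a b K) (swp a b N)) (swp a b Q')"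
    using e_com1.IH(2) by simp
  have 7: "entails S (acomp S (acomp S (swp a b \<Psi>) (swp a b \<Psi>P)) (swp a b \<Psi>Q)) (chan_eq S (swp a b M) (swp a b K))"
    using entails_eqvt[OF e_com1.hyps(7), of a b] by simp
  have 8: "fresh_star (set (swp a b as)) (swp a b Q)" using fresh_star_set_eqvt[OF _ e_com1.hyps(8), of a b] by simp
  from etrans.e_com1[OF 1 2 3 4 5 6 7 8] show ?case by (simp add: subst_eqvt)
next
  case (e_com2 P bsP \<Psi>P Q bsQ \<Psi>Q \<Psi> M K N P' as Q')
  have 1: "frame_of S (swp a b P) (swp a b bsP) (swp a b \<Psi>P)" using e_com2.hyps(1) by (rule frame_of_eqvt)
  have 2: "frame_of S (swp a b Q) (swp a b bsQ) (swp a b \<Psi>Q)" using e_com2.hyps(2) by (rule frame_of_eqvt)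
  have 3: "fresh_star (set (swp a b bsP)) (swp a b \<Psi>, swp a b \<Psi>Q, swp a b P, swp a b Q, swp a b M, swp a b bsQ)"
    using fresh_star_set_eqvt[OF _ e_com2.hyps(3), of a b] by simp
  have 4: "fresh_star (set (swp a b bsQ)) (swp a b \<Psi>, swp a b \<Psi>P, swp a b P, swp a b Q, swp a b K)"
    using fresh_star_set_eqvt[OF _ e_com2.hyps(4), of a b] by simp
  have 5: "etrans S (acomp S (swp a b \<Psi>Q) (swp a b \<Psi>)) (swp a b P) (AInE (swp a b M) (swp a b N)) (swp a b P')"
    using e_com2.IH(1) by simp
  have 6: "etrans S (acomp S (swp a b \<Psi>P) (swp a b \<Psi>)) (swp a b Q) (AOut (swp a b K) (swp a b as) (swp a b N)) (swp a b Q')"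
    using e_com2.IH(2) by simp
  have 7: "entails S (acomp S (acomp S (swp a b \<Psi>) (swp a b \<Psi>P)) (swp a b \<Psi>Q)) (chan_eq S (swp a b M) (swp a b K))"
    using entails_eqvt[OF e_com2.hyps(7), of a b] by simp
  have 8: "fresh_star (set (swp a b as)) (swp a b P)" using fresh_star_set_eqvt[OF _ e_com2.hyps(8), of a b] by simp
  from etrans.e_com2[OF 1 2 3 4 5 6 7 8] show ?case by (simp add: subst_eqvt)
next
  case (e_par1 Q bsQ \<Psi>Q \<Psi> P \<alpha> P')
  have 1: "frame_of S (swp a b Q) (swp a b bsQ) (swp a b \<Psi>Q)" using e_par1.hyps(1) by (rule frame_of_eqvt)
  have 2: "fresh_star (set (swp a b bsQ)) (swp a b \<Psi>, swp a b P, swp a b \<alpha>)"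
    using fresh_star_set_eqvt[OF _ e_par1.hyps(2), of a b] by simp
  have 3: "etrans S (acomp S (swp a b \<Psi>Q) (swp a b \<Psi>)) (swp a b P) (swp a b \<alpha>) (swp a b P')"
    using e_par1.IH by simp
  have 4: "fresh_star (bn (swp a b \<alpha>)) (swp a b Q)" using fresh_star_bn_eqvt[OF _ e_par1.hyps(4), of a b] by simp
  from etrans.e_par1[OF 1 2 3 4] show ?case by simp
next
  case (e_par2 P bsP \<Psi>P \<Psi> Q \<alpha> Q')
  have 1: "frame_of S (swp a b P) (swp a b bsP) (swp a b \<Psi>P)" using e_par2.hyps(1) by (rule frame_of_eqvt)
  have 2: "fresh_star (set (swp a b bsP)) (swp a b \<Psi>, swp a b Q, swp a b \<alpha>)"
    using fresh_star_set_eqvt[OF _ e_par2.hyps(2), of a b] by simp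
  have 3: "etrans S (acomp S (swp a b \<Psi>P) (swp a b \<Psi>)) (swp a b Q) (swp a b \<alpha>) (swp a b Q')"
    using e_par2.IH by simp
  have 4: "fresh_star (bn (swp a b \<alpha>)) (swp a b P)" using fresh_star_bn_eqvt[OF _ e_par2.hyps(4), of a b] by simp
  from etrans.e_par2[OF 1 2 3 4] show ?case by simp
next
  case (e_scope \<Psi> P \<alpha> P' d)
  have "fresh (swap_name a b d) (swp a b \<alpha>)" "fresh (swap_name a b d) (swp a b \<Psi>)" using e_scope by simp_all
  from etrans.e_scope[OF e_scope.IH this] show ?case by simp
next
  case (e_open \<Psi> P M as cs N P' d)
  have 1: "etrans S (swp a b \<Psi>) (swp a b P) (AOut (swp a b M) (swp a b as @ swp a b cs) (swp a b N)) (swp a b P')"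
    using e_open.IH by simp
  have 2: "swap_name a b d \<notin> set (swp a b as)" "swap_name a b d \<notin> set (swp a b cs)"
    using e_open by (simp_all add: set_swp_names del: set_map)
  have 3: "fresh (swap_name a b d) (swp a b \<Psi>)" "fresh (swap_name a b d) (swp a b M)" using e_open by simp_all
  have 4: "swap_name a b d \<in> supp (swp a b N)" using e_open.hyps(6) supp_eqvt[OF nominal_terms] by simp
  from etrans.e_open[OF 1 2 3 4] show ?case by simp
next
  case (e_rep \<Psi> P \<alpha> P')
  thus ?case by (simp add: etrans.e_rep)
qed

lemma ltrans_in_fresh: "ltrans S \<Psi> P \<alpha> P' \<Longrightarrow> \<alpha> = AIn K x \<Longrightarrow> fresh a P \<Longrightarrow> a \<noteq> x \<Longrightarrow> fresh a P'"
proof (induction arbitrary: K x rule: ltrans.induct)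
  case (l_case \<Psi> P \<alpha> P' \<phi> cs)
  thus ?case by fastforce
qed auto

lemma etrans_in_fresh: "etrans S \<Psi> P \<alpha> P' \<Longrightarrow> \<alpha> = AInE K N \<Longrightarrow> fresh a P \<Longrightarrow> fresh a N \<Longrightarrow> fresh a P'"
proof (induction arbitrary: K N rule: etrans.induct)
  case (e_in \<Psi> M K' x P N')
  thus ?case using subst_fresh by auto
next
  case (e_case \<Psi> P \<alpha> P' \<phi> cs)
  thus ?case by fastforce
qed auto

lemma ltrans_no_inE: "ltrans S \<Psi> P \<alpha> P' \<Longrightarrow> \<alpha> \<noteq> AInE K N"
  by (induction rule: ltrans.induct) auto

lemma etrans_no_in: "etrans S \<Psi> P \<alpha> P' \<Longrightarrow> \<alpha> \<noteq> AIn K x"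
  by (induction rule: etrans.induct) auto

section \<open>Late and early transitions\<close>

text \<open>The Par rule needs the frame binders of the idle component to be fresh for the received
  term. As the premise holds for every received term, the clashing binders can be renamed one
  at a time, by induction on their number.\<close>
lemma frame_of_avoiding_input:
  "card (set bs \<inter> supp N) = n \<Longrightarrow> frame_of S Q bs \<Psi>Q \<Longrightarrow> fresh_star (set bs) (\<Psi>, P, K, x, P1) \<Longrightarrow>
   (\<forall>N'. etrans S (acomp S \<Psi>Q \<Psi>) P (AInE K N') (subst_agent S P1 x N')) \<Longrightarrow>
   \<exists>bs' \<Psi>Q'. frame_of S Q bs' \<Psi>Q' \<and> fresh_star (set bs') (\<Psi>, P, AInE K N) \<and>
     etrans S (acomp S \<Psi>Q' \<Psi>) P (AInE K N) (subst_agent S P1 x N)"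
proof (induction n arbitrary: bs \<Psi>Q)
  case 0
  hence "set bs \<inter> supp N = {}" by simp
  hence "fresh_star (set bs) (\<Psi>, P, AInE K N)" using "0.prems"(3) by (auto simp: fresh_star_def fresh_def)
  thus ?case using "0.prems" by blast
next
  case (Suc m)
  then obtain b where b: "b \<in> set bs" "b \<in> supp N" by (metis card.empty disjoint_iff nat.distinct(1))
  obtain c where c: "c \<notin> {x, b}" "fresh c (\<Psi>, P, K, P1, N, Q, \<Psi>Q, bs)"
    using obtain_fresh[of "{x, b}" "(\<Psi>, P, K, P1, N, Q, \<Psi>Q, bs)"] by auto
  have fb: "fresh b \<Psi>" "fresh b P" "fresh b K" "b \<noteq> x" "fresh b P1"
    using Suc.prems(3) b(1) by (auto simp: fresh_star_def)
  have fr: "frame_of S Q (swp b c bs) (swp b c \<Psi>Q)"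
    using frame_rename[OF Suc.prems(2) b(1)] c by simp
  have cbs: "c \<notin> set bs" using c by simp
  have card: "card (set (swp b c bs) \<inter> supp N) = m"
  proof -
    have "set (swp b c bs) \<inter> supp N = (set bs \<inter> supp N) - {b}"
      unfolding set_swp_names using swap_name_image_inter[OF b(1) cbs] c by (simp add: fresh_def)
    thus ?thesis using Suc.prems(1) b by simp
  qed
  have fs: "fresh_star (set (swp b c bs)) (\<Psi>, P, K, x, P1)"
  proof -
    have "set (swp b c bs) \<subseteq> (set bs - {b}) \<union> {c}"
      unfolding set_swp_names using b cbs by (auto simp: swap_name_def)
    thus ?thesis using Suc.prems(3) c by (auto simp: fresh_star_def)
  qed
  have et: "\<forall>N'. etrans S (acomp S (swp b c \<Psi>Q) \<Psi>) P (AInE K N') (subst_agent S P1 x N')"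
  proof
    fix N'
    have "etrans S (acomp S \<Psi>Q \<Psi>) P (AInE K (swp b c N')) (subst_agent S P1 x (swp b c N'))"
      using Suc.prems(4) by blast
    from etrans_eqvt[OF this, of b c]
    have "etrans S (acomp S (swp b c \<Psi>Q) (swp b c \<Psi>)) (swp b c P) (AInE (swp b c K) N') (subst_agent S (swp b c P1) x N')"
      using fb c by (simp add: subst_eqvt)
    moreover have "swp b c \<Psi> = \<Psi>" "swp b c P = P" "swp b c K = K" "swp b c P1 = P1"
      using fb c fresh_swp_id[OF nominal_assertions] fresh_swp_id[OF nominal_agent] fresh_swp_id[OF nominal_terms] by auto
    ultimately show "etrans S (acomp S (swp b c \<Psi>Q) \<Psi>) P (AInE K N') (subst_agent S P1 x N')" by simp
  qed
  show ?case using Suc.IH[OF card fr fs et] .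
qed

lemma ltrans_in_swap_binder:
  assumes tr: "ltrans S \<Psi> P (AIn K c) T" and sb: "subst_agent S T c N = P'"
    and fx: "fresh x \<Psi>" "fresh x P" "fresh x K" "fresh x N" "fresh x P'"
    and fc: "fresh c \<Psi>" "fresh c P" "fresh c K" "fresh c N" "fresh c P'"
  shows "ltrans S \<Psi> P (AIn K x) (swp x c T) \<and> subst_agent S (swp x c T) x N = P'"
proof -
  have e: "swp x c \<Psi> = \<Psi>" "swp x c P = P" "swp x c K = K" "swp x c N = N" "swp x c P' = P'"
    using fx fc fresh_swp_id[OF nominal_assertions] fresh_swp_id[OF nominal_agent] fresh_swp_id[OF nominal_terms] by auto
  have "ltrans S (swp x c \<Psi>) (swp x c P) (swp x c (AIn K c)) (swp x c T)" by (rule ltrans_eqvt[OF tr])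
  hence 1: "ltrans S \<Psi> P (AIn K x) (swp x c T)" using e by simp
  have "swp x c (subst_agent S T c N) = subst_agent S (swp x c T) x N" using subst_eqvt[of x c T c N] e by simp
  hence "subst_agent S (swp x c T) x N = P'" using sb e by simp
  thus ?thesis using 1 by simp
qed

lemma ltrans_in_choose_binder:
  assumes "finite A" and "fresh x P"
    and avoiding: "\<And>y. y \<notin> A \<Longrightarrow> fresh y P \<Longrightarrow> \<exists>T. ltrans S \<Psi> P (AIn K y) T \<and> subst_agent S T y N = P'"
    and "x \<in> A \<Longrightarrow> fresh x (\<Psi>, K, N, P')"
  shows "\<exists>T. ltrans S \<Psi> P (AIn K x) T \<and> subst_agent S T x N = P'"
proof (cases "x \<in> A")
  case True
  obtain c where c: "c \<notin> A" "fresh c (\<Psi>, P, K, N, P')"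
    using obtain_fresh[of A "(\<Psi>, P, K, N, P')"] \<open>finite A\<close> by auto
  then obtain T where T: "ltrans S \<Psi> P (AIn K c) T" "subst_agent S T c N = P'"
    using avoiding by auto
  have "fresh x (\<Psi>, K, N, P')" using True assms(4) by blast
  with ltrans_in_swap_binder[OF T] c assms(2) show ?thesis by auto
qed (use assms in blast)

lemma late_to_early: "ltrans S \<Psi> P \<alpha> P' \<Longrightarrow>
   (\<forall>K x. \<alpha> = AIn K x \<longrightarrow> (\<forall>N. etrans S \<Psi> P (AInE K N) (subst_agent S P' x N))) \<and>
   ((\<forall>K x. \<alpha> \<noteq> AIn K x) \<longrightarrow> etrans S \<Psi> P \<alpha> P')"
proof (induction rule: ltrans.induct)
  case (l_in \<Psi> M K x P) thus ?case by (auto intro: etrans.e_in)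
next
  case (l_out \<Psi> M K N P) thus ?case by (auto intro: etrans.e_out)
next
  case (l_case \<Psi> P \<alpha> P' \<phi> cs) thus ?case by (auto intro: etrans.e_case)
next
  case (l_com1 P bsP \<Psi>P Q bsQ \<Psi>Q \<Psi> M K as N P' x Q')
  have 1: "etrans S (acomp S \<Psi>Q \<Psi>) P (AOut M as N) P'" using l_com1.IH(1) by auto
  have 2: "etrans S (acomp S \<Psi>P \<Psi>) Q (AInE K N) (subst_agent S Q' x N)" using l_com1.IH(2) by auto
  show ?case using etrans.e_com1[OF l_com1.hyps(1-4) 1 2 l_com1.hyps(7,8)] by auto
next
  case (l_com2 P bsP \<Psi>P Q bsQ \<Psi>Q \<Psi> M K x P' as N Q')
  have 1: "etrans S (acomp S \<Psi>Q \<Psi>) P (AInE M N) (subst_agent S P' x N)" using l_com2.IH(1) by auto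
  have 2: "etrans S (acomp S \<Psi>P \<Psi>) Q (AOut K as N) Q'" using l_com2.IH(2) by auto
  show ?case using etrans.e_com2[OF l_com2.hyps(1-4) 1 2 l_com2.hyps(7,8)] by auto
next
  case (l_par1 Q bsQ \<Psi>Q \<Psi> P \<alpha> P')
  show ?case
  proof (intro conjI allI impI)
    fix K x and N :: 't assume \<alpha>: "\<alpha> = AIn K x"
    have fsP': "fresh_star (set bsQ) P'"
      using l_par1.hyps(2) ltrans_in_fresh[OF l_par1.hyps(3) \<alpha>] \<alpha> by (auto simp: fresh_star_def)
    have fs: "fresh_star (set bsQ) (\<Psi>, P, K, x, P')" using l_par1.hyps(2) \<alpha> fsP' by (auto simp: fresh_star_def)
    have ih: "\<forall>N'. etrans S (acomp S \<Psi>Q \<Psi>) P (AInE K N') (subst_agent S P' x N')" using l_par1.IH \<alpha> by auto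
    obtain bs' \<Psi>Q' where o: "frame_of S Q bs' \<Psi>Q'" "fresh_star (set bs') (\<Psi>, P, AInE K N)"
      "etrans S (acomp S \<Psi>Q' \<Psi>) P (AInE K N) (subst_agent S P' x N)"
      using frame_of_avoiding_input[OF refl l_par1.hyps(1) fs ih] by blast
    have "etrans S \<Psi> (Par P Q) (AInE K N) (Par (subst_agent S P' x N) Q)"
      using etrans.e_par1[OF o(1) o(2) o(3)] by simp
    moreover have "fresh x Q" using l_par1.hyps(4) \<alpha> by simp
    ultimately show "etrans S \<Psi> (Par P Q) (AInE K N) (subst_agent S (Par P' Q) x N)" by (simp add: subst_id)
  next
    assume "\<forall>K x. \<alpha> \<noteq> AIn K x"
    hence "etrans S (acomp S \<Psi>Q \<Psi>) P \<alpha> P'" using l_par1.IH by blast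
    thus "etrans S \<Psi> (Par P Q) \<alpha> (Par P' Q)" using etrans.e_par1[OF l_par1.hyps(1,2) _ l_par1.hyps(4)] by blast
  qed
next
  case (l_par2 P bsP \<Psi>P \<Psi> Q \<alpha> Q')
  show ?case
  proof (intro conjI allI impI)
    fix K x and N :: 't assume \<alpha>: "\<alpha> = AIn K x"
    have fsQ': "fresh_star (set bsP) Q'"
      using l_par2.hyps(2) ltrans_in_fresh[OF l_par2.hyps(3) \<alpha>] \<alpha> by (auto simp: fresh_star_def)
    have fs: "fresh_star (set bsP) (\<Psi>, Q, K, x, Q')" using l_par2.hyps(2) \<alpha> fsQ' by (auto simp: fresh_star_def)
    have ih: "\<forall>N'. etrans S (acomp S \<Psi>P \<Psi>) Q (AInE K N') (subst_agent S Q' x N')" using l_par2.IH \<alpha> by auto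
    obtain bs' \<Psi>P' where o: "frame_of S P bs' \<Psi>P'" "fresh_star (set bs') (\<Psi>, Q, AInE K N)"
      "etrans S (acomp S \<Psi>P' \<Psi>) Q (AInE K N) (subst_agent S Q' x N)"
      using frame_of_avoiding_input[OF refl l_par2.hyps(1) fs ih] by blast
    have "etrans S \<Psi> (Par P Q) (AInE K N) (Par P (subst_agent S Q' x N))"
      using etrans.e_par2[OF o(1) o(2) o(3)] by simp
    moreover have "fresh x P" using l_par2.hyps(4) \<alpha> by simp
    ultimately show "etrans S \<Psi> (Par P Q) (AInE K N) (subst_agent S (Par P Q') x N)" by (simp add: subst_id)
  next
    assume "\<forall>K x. \<alpha> \<noteq> AIn K x"
    hence "etrans S (acomp S \<Psi>P \<Psi>) Q \<alpha> Q'" using l_par2.IH by blast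
    thus "etrans S \<Psi> (Par P Q) \<alpha> (Par P Q')" using etrans.e_par2[OF l_par2.hyps(1,2) _ l_par2.hyps(4)] by blast
  qed
next
  case (l_scope \<Psi> P \<alpha> P' b)
  show ?case
  proof (intro conjI allI impI)
    fix K x and N :: 't assume \<alpha>: "\<alpha> = AIn K x"
    have fb: "b \<noteq> x" "fresh b K" "fresh b \<Psi>" using l_scope.hyps(2,3) \<alpha> by auto
    have "\<exists>c. c \<notin> {b, x} \<and> fresh c (K, \<Psi>, P, P', N)" by (rule obtain_fresh) simp_all
    then obtain c where c: "c \<notin> {b, x}" "fresh c (K, \<Psi>, P, P', N)" by blast
    have "etrans S \<Psi> P (AInE K (swp b c N)) (subst_agent S P' x (swp b c N))" using l_scope.IH \<alpha> by auto
    from etrans_eqvt[OF this, of b c]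
    have "etrans S (swp b c \<Psi>) (swp b c P) (AInE (swp b c K) N) (subst_agent S (swp b c P') x N)"
      using fb c by (simp add: subst_eqvt)
    moreover have "swp b c \<Psi> = \<Psi>" "swp b c K = K"
      using fb c fresh_swp_id[OF nominal_assertions] fresh_swp_id[OF nominal_terms] by auto
    ultimately have e: "etrans S \<Psi> (swp b c P) (AInE K N) (subst_agent S (swp b c P') x N)" by simp
    have "fresh c (AInE K N)" using c by simp
    from etrans.e_scope[OF e this] c
    have "etrans S \<Psi> (Res c (swp b c P)) (AInE K N) (Res c (subst_agent S (swp b c P') x N))" by simp
    moreover have "Res c (swp b c P) = Res b P" using Res_alpha[of c P b] c by simp
    moreover have "Res c (subst_agent S (swp b c P') x N) = subst_agent S (Res b P') x N"
    proof -
      have "Res c (subst_agent S (swp b c P') x N) = subst_agent S (Res c (swp b c P')) x N"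
        using c by (simp add: subst_Res)
      also have "Res c (swp b c P') = Res b P'" using Res_alpha[of c P' b] c by simp
      finally show ?thesis .
    qed
    ultimately show "etrans S \<Psi> (Res b P) (AInE K N) (subst_agent S (Res b P') x N)" by simp
  next
    assume "\<forall>K x. \<alpha> \<noteq> AIn K x"
    hence "etrans S \<Psi> P \<alpha> P'" using l_scope.IH by blast
    thus "etrans S \<Psi> (Res b P) \<alpha> (Res b P')" using etrans.e_scope l_scope.hyps(2,3) by blast
  qed
next
  case (l_open \<Psi> P M as cs N P' b)
  thus ?case by (auto intro: etrans.e_open)
next
  case (l_rep \<Psi> P \<alpha> P')
  thus ?case by (auto intro: etrans.e_rep)
qed

lemma early_to_late: "etrans S \<Psi> P \<alpha> P' \<Longrightarrow>
   (\<forall>K N. \<alpha> = AInE K N \<longrightarrow> (\<forall>x. fresh x P \<longrightarrow> (\<exists>P1. ltrans S \<Psi> P (AIn K x) P1 \<and> subst_agent S P1 x N = P'))) \<and>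
   ((\<forall>K N. \<alpha> \<noteq> AInE K N) \<longrightarrow> ltrans S \<Psi> P \<alpha> P')"
proof (induction rule: etrans.induct)
  case (e_in \<Psi> M K z P N)
  show ?case
  proof (intro conjI allI impI)
    fix K' N' x assume a: "AInE K N = AInE K' N'" and fx: "fresh x (In M z P)"
    hence KN: "K' = K" "N' = N" by simp_all
    show "\<exists>P1. ltrans S \<Psi> (In M z P) (AIn K' x) P1 \<and> subst_agent S P1 x N' = subst_agent S P z N"
    proof (cases "x = z")
      case True thus ?thesis using KN e_in ltrans.l_in by blast
    next
      case False
      hence f: "fresh x P" "fresh x M" using fx by auto
      have e: "In M z P = In M x (swp z x P)" using In_alpha[of x P M z] f by simp
      have "ltrans S \<Psi> (In M x (swp z x P)) (AIn K x) (swp z x P)" using e_in by (rule ltrans.l_in)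
      moreover have "subst_agent S (swp z x P) x N = subst_agent S P z N" using f(1) by (rule subst_alpha)
      ultimately show ?thesis using e KN by auto
    qed
  qed auto
next
  case (e_out \<Psi> M K N P) thus ?case by (auto intro: ltrans.l_out)
next
  case (e_case \<Psi> P \<alpha> P' \<phi> cs)
  show ?case
  proof (intro conjI allI impI)
    fix K N x assume a: "\<alpha> = AInE K N" and fx: "fresh x (Case cs)"
    have "fresh x P" using fx e_case.hyps(2) by auto
    then obtain P1 where "ltrans S \<Psi> P (AIn K x) P1" "subst_agent S P1 x N = P'" using e_case.IH a by blast
    thus "\<exists>P1. ltrans S \<Psi> (Case cs) (AIn K x) P1 \<and> subst_agent S P1 x N = P'"
      using ltrans.l_case e_case.hyps(2,3) by blast
  next
    assume "\<forall>K N. \<alpha> \<noteq> AInE K N"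
    thus "ltrans S \<Psi> (Case cs) \<alpha> P'" using e_case.IH e_case.hyps(2,3) ltrans.l_case by blast
  qed
next
  case (e_com1 P bsP \<Psi>P Q bsQ \<Psi>Q \<Psi> M K as N P' Q')
  have 1: "ltrans S (acomp S \<Psi>Q \<Psi>) P (AOut M as N) P'" using e_com1.IH(1) by auto
  have "\<exists>x. x \<notin> {} \<and> fresh x Q" by (rule obtain_fresh) simp_all
  then obtain x where "fresh x Q" by blast
  then obtain Q1 where 2: "ltrans S (acomp S \<Psi>P \<Psi>) Q (AIn K x) Q1" and q: "subst_agent S Q1 x N = Q'"
    using e_com1.IH(2) by blast
  show ?case using ltrans.l_com1[OF e_com1.hyps(1-4) 1 2 e_com1.hyps(7,8)] q by auto
next
  case (e_com2 P bsP \<Psi>P Q bsQ \<Psi>Q \<Psi> M K N P' as Q')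
  have 2: "ltrans S (acomp S \<Psi>P \<Psi>) Q (AOut K as N) Q'" using e_com2.IH(2) by auto
  have "\<exists>x. x \<notin> {} \<and> fresh x P" by (rule obtain_fresh) simp_all
  then obtain x where "fresh x P" by blast
  then obtain P1 where 1: "ltrans S (acomp S \<Psi>Q \<Psi>) P (AIn M x) P1" and q: "subst_agent S P1 x N = P'"
    using e_com2.IH(1) by blast
  show ?case using ltrans.l_com2[OF e_com2.hyps(1-4) 1 2 e_com2.hyps(7,8)] q by auto
next
  case (e_par1 Q bsQ \<Psi>Q \<Psi> P \<alpha> P')
  show ?case
  proof (intro conjI allI impI)
    fix K N x assume \<alpha>: "\<alpha> = AInE K N" and x: "fresh x (Par P Q)"
    have fs: "fresh_star (set bsQ) (\<Psi>, P, AInE K N)" using e_par1.hyps(2) \<alpha> by simp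
    show "\<exists>T. ltrans S \<Psi> (Par P Q) (AIn K x) T \<and> subst_agent S T x N = Par P' Q"
    proof (rule ltrans_in_choose_binder[of "set bsQ"])
      fix y assume y: "y \<notin> set bsQ" "fresh y (Par P Q)"
      then obtain P1 where P1: "ltrans S (acomp S \<Psi>Q \<Psi>) P (AIn K y) P1" "subst_agent S P1 y N = P'"
        using e_par1.IH \<alpha> by auto
      have "fresh_star (set bsQ) (\<Psi>, P, AIn K y)" using fs y by (auto simp: fresh_star_def)
      hence "ltrans S \<Psi> (Par P Q) (AIn K y) (Par P1 Q)" using ltrans.l_par1[OF e_par1.hyps(1) _ P1(1)] y by simp
      moreover have "subst_agent S (Par P1 Q) y N = Par P' Q" using P1(2) y subst_id by simp
      ultimately show "\<exists>T. ltrans S \<Psi> (Par P Q) (AIn K y) T \<and> subst_agent S T y N = Par P' Q" by blast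
    next
      assume "x \<in> set bsQ"
      moreover have "fresh x P'" if "fresh x \<Psi>" "fresh x N"
        using etrans_in_fresh[OF e_par1.hyps(3) \<alpha>] x that by simp
      ultimately show "fresh x (\<Psi>, K, N, Par P' Q)" using fs x by (auto simp: fresh_star_def)
    qed (use x in simp_all)
  next
    assume "\<forall>K N. \<alpha> \<noteq> AInE K N"
    hence "ltrans S (acomp S \<Psi>Q \<Psi>) P \<alpha> P'" using e_par1.IH by blast
    thus "ltrans S \<Psi> (Par P Q) \<alpha> (Par P' Q)" using ltrans.l_par1[OF e_par1.hyps(1,2) _ e_par1.hyps(4)] by blast
  qed
next
  case (e_par2 P bsP \<Psi>P \<Psi> Q \<alpha> Q')
  show ?case
  proof (intro conjI allI impI)
    fix K N x assume \<alpha>: "\<alpha> = AInE K N" and x: "fresh x (Par P Q)"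
    have fs: "fresh_star (set bsP) (\<Psi>, Q, AInE K N)" using e_par2.hyps(2) \<alpha> by simp
    show "\<exists>T. ltrans S \<Psi> (Par P Q) (AIn K x) T \<and> subst_agent S T x N = Par P Q'"
    proof (rule ltrans_in_choose_binder[of "set bsP"])
      fix y assume y: "y \<notin> set bsP" "fresh y (Par P Q)"
      then obtain Q1 where Q1: "ltrans S (acomp S \<Psi>P \<Psi>) Q (AIn K y) Q1" "subst_agent S Q1 y N = Q'"
        using e_par2.IH \<alpha> by auto
      have "fresh_star (set bsP) (\<Psi>, Q, AIn K y)" using fs y by (auto simp: fresh_star_def)
      hence "ltrans S \<Psi> (Par P Q) (AIn K y) (Par P Q1)" using ltrans.l_par2[OF e_par2.hyps(1) _ Q1(1)] y by simp
      moreover have "subst_agent S (Par P Q1) y N = Par P Q'" using Q1(2) y subst_id by simp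
      ultimately show "\<exists>T. ltrans S \<Psi> (Par P Q) (AIn K y) T \<and> subst_agent S T y N = Par P Q'" by blast
    next
      assume "x \<in> set bsP"
      moreover have "fresh x Q'" if "fresh x \<Psi>" "fresh x N"
        using etrans_in_fresh[OF e_par2.hyps(3) \<alpha>] x that by simp
      ultimately show "fresh x (\<Psi>, K, N, Par P Q')" using fs x by (auto simp: fresh_star_def)
    qed (use x in simp_all)
  next
    assume "\<forall>K N. \<alpha> \<noteq> AInE K N"
    hence "ltrans S (acomp S \<Psi>P \<Psi>) Q \<alpha> Q'" using e_par2.IH by blast
    thus "ltrans S \<Psi> (Par P Q) \<alpha> (Par P Q')" using ltrans.l_par2[OF e_par2.hyps(1,2) _ e_par2.hyps(4)] by blast
  qed
next
  case (e_scope \<Psi> P \<alpha> P' b)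
  show ?case
  proof (intro conjI allI impI)
    fix K N x assume \<alpha>: "\<alpha> = AInE K N" and x: "fresh x (Res b P)"
    have b: "fresh b K" "fresh b N" "fresh b \<Psi>" using e_scope.hyps(2,3) \<alpha> by auto
    show "\<exists>T. ltrans S \<Psi> (Res b P) (AIn K x) T \<and> subst_agent S T x N = Res b P'"
    proof (rule ltrans_in_choose_binder[of "{b}"])
      fix y assume y: "y \<notin> {b}" "fresh y (Res b P)"
      then obtain P1 where P1: "ltrans S \<Psi> P (AIn K y) P1" "subst_agent S P1 y N = P'"
        using e_scope.IH \<alpha> by auto
      have "ltrans S \<Psi> (Res b P) (AIn K y) (Res b P1)" using ltrans.l_scope[OF P1(1)] b y by simp
      moreover have "subst_agent S (Res b P1) y N = Res b P'" using P1(2) y b subst_Res by simp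
      ultimately show "\<exists>T. ltrans S \<Psi> (Res b P) (AIn K y) T \<and> subst_agent S T y N = Res b P'" by blast
    qed (use x b in simp_all)
  next
    assume "\<forall>K N. \<alpha> \<noteq> AInE K N"
    hence "ltrans S \<Psi> P \<alpha> P'" using e_scope.IH by blast
    thus "ltrans S \<Psi> (Res b P) \<alpha> (Res b P')" using ltrans.l_scope e_scope.hyps(2,3) by blast
  qed
next
  case (e_open \<Psi> P M as cs N P' b)
  thus ?case by (auto intro: ltrans.l_open)
next
  case (e_rep \<Psi> P \<alpha> P')
  show ?case
  proof (intro conjI allI impI)
    fix K N x assume a: "\<alpha> = AInE K N" and fx: "fresh x (Bang P)"
    have "fresh x (Par P (Bang P))" using fx by simp
    then obtain P1 where "ltrans S \<Psi> (Par P (Bang P)) (AIn K x) P1" "subst_agent S P1 x N = P'"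
      using e_rep.IH a by blast
    thus "\<exists>P1. ltrans S \<Psi> (Bang P) (AIn K x) P1 \<and> subst_agent S P1 x N = P'" using ltrans.l_rep by blast
  next
    assume "\<forall>K N. \<alpha> \<noteq> AInE K N"
    thus "ltrans S \<Psi> (Bang P) \<alpha> P'" using e_rep.IH ltrans.l_rep by blast
  qed
qed

lemma ltrans_in_imp_etrans:
  "ltrans S \<Psi> P (AIn K x) P' \<Longrightarrow> etrans S \<Psi> P (AInE K N) (subst_agent S P' x N)"
  using late_to_early by blast

lemma ltrans_imp_etrans:
  "ltrans S \<Psi> P \<alpha> P' \<Longrightarrow> (\<And>K x. \<alpha> \<noteq> AIn K x) \<Longrightarrow> etrans S \<Psi> P \<alpha> P'"
  using late_to_early by blast

lemma etrans_inE_imp_ltrans: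
  "etrans S \<Psi> P (AInE K N) P' \<Longrightarrow> fresh x P \<Longrightarrow>
   \<exists>P1. ltrans S \<Psi> P (AIn K x) P1 \<and> subst_agent S P1 x N = P'"
  using early_to_late by blast

lemma etrans_imp_ltrans:
  "etrans S \<Psi> P \<alpha> P' \<Longrightarrow> (\<And>K N. \<alpha> \<noteq> AInE K N) \<Longrightarrow> ltrans S \<Psi> P \<alpha> P'"
  using early_to_late by blast

end

section \<open>Bisimulations\<close>

definition late_transfer :: "('t::pt, 'c::pt, 'a::pt) psi \<Rightarrow> ('a \<times> ('t, 'c, 'a) agent \<times> ('t, 'c, 'a) agent) set \<Rightarrow>
    'a \<Rightarrow> ('t, 'c, 'a) agent \<Rightarrow> ('t, 'c, 'a) agent \<Rightarrow> bool" where
  "late_transfer S R \<Psi> P Q \<longleftrightarrow>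
     (\<forall>\<alpha> P'. fresh_star (bn \<alpha>) \<Psi> \<and> fresh_star (bn \<alpha>) Q \<longrightarrow>
        (case \<alpha> of
           AIn M x \<Rightarrow> ltrans S \<Psi> P \<alpha> P' \<longrightarrow>
              (\<forall>L. \<exists>Q'. ltrans S \<Psi> Q \<alpha> Q' \<and>
                   (\<Psi>, subst_agent S P' x L, subst_agent S Q' x L) \<in> R)
         | _ \<Rightarrow> ltrans S \<Psi> P \<alpha> P' \<longrightarrow> (\<exists>Q'. ltrans S \<Psi> Q \<alpha> Q' \<and> (\<Psi>, P', Q') \<in> R)))"

definition early_transfer :: "('t::pt, 'c::pt, 'a::pt) psi \<Rightarrow> ('a \<times> ('t, 'c, 'a) agent \<times> ('t, 'c, 'a) agent) set \<Rightarrow>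
    'a \<Rightarrow> ('t, 'c, 'a) agent \<Rightarrow> ('t, 'c, 'a) agent \<Rightarrow> bool" where
  "early_transfer S R \<Psi> P Q \<longleftrightarrow>
     (\<forall>\<alpha> P'. fresh_star (bn \<alpha>) \<Psi> \<and> fresh_star (bn \<alpha>) Q \<longrightarrow>
        etrans S \<Psi> P \<alpha> P' \<longrightarrow> (\<exists>Q'. etrans S \<Psi> Q \<alpha> Q' \<and> (\<Psi>, P', Q') \<in> R))"

lemma late_bisim_iff_transfer:
  "late_bisim S R \<longleftrightarrow> (\<forall>\<Psi> P Q. (\<Psi>, P, Q) \<in> R \<longrightarrow>
     static_eq S \<Psi> P Q \<and> (\<Psi>, Q, P) \<in> R \<and> (\<forall>\<Psi>'. (acomp S \<Psi> \<Psi>', P, Q) \<in> R) \<and> late_transfer S R \<Psi> P Q)"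
  unfolding late_bisim_def late_transfer_def ..

lemma early_bisim_iff_transfer:
  "early_bisim S R \<longleftrightarrow> (\<forall>\<Psi> P Q. (\<Psi>, P, Q) \<in> R \<longrightarrow>
     static_eq S \<Psi> P Q \<and> (\<Psi>, Q, P) \<in> R \<and> (\<forall>\<Psi>'. (acomp S \<Psi> \<Psi>', P, Q) \<in> R) \<and> early_transfer S R \<Psi> P Q)"
  unfolding early_bisim_def early_transfer_def ..

context nominal_psi
begin

lemma late_transfer_imp_early_transfer:
  assumes late: "late_transfer S R \<Psi> P Q"
  shows "early_transfer S R \<Psi> P Q"
  unfolding early_transfer_def
proof (intro allI impI)
  fix \<alpha> P' assume fresh_bn: "fresh_star (bn \<alpha>) \<Psi> \<and> fresh_star (bn \<alpha>) Q" and tr: "etrans S \<Psi> P \<alpha> P'"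
  show "\<exists>Q'. etrans S \<Psi> Q \<alpha> Q' \<and> (\<Psi>, P', Q') \<in> R"
  proof (cases \<alpha>)
    case (AInE K N)
    obtain x where x: "fresh x (P, Q, \<Psi>)"
      using obtain_fresh[of "{}" "(P, Q, \<Psi>)"] by auto
    then obtain P1 where P1: "ltrans S \<Psi> P (AIn K x) P1" "subst_agent S P1 x N = P'"
      using etrans_inE_imp_ltrans[of \<Psi> P K N P' x] tr AInE by auto
    obtain Q1 where Q1: "ltrans S \<Psi> Q (AIn K x) Q1" "(\<Psi>, subst_agent S P1 x N, subst_agent S Q1 x N) \<in> R"
      using late[unfolded late_transfer_def, rule_format, of "AIn K x" P1] P1(1) x by auto
    thus ?thesis using ltrans_in_imp_etrans P1(2) AInE by blast
  next
    case (AIn K x)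
    thus ?thesis using etrans_no_in tr by blast
  next
    case (AOut M as N)
    obtain Q' where "ltrans S \<Psi> Q \<alpha> Q'" "(\<Psi>, P', Q') \<in> R"
      using late fresh_bn etrans_imp_ltrans[OF tr] AOut unfolding late_transfer_def by fastforce
    thus ?thesis using ltrans_imp_etrans AOut by blast
  next
    case ATau
    obtain Q' where "ltrans S \<Psi> Q \<alpha> Q'" "(\<Psi>, P', Q') \<in> R"
      using late fresh_bn etrans_imp_ltrans[OF tr] ATau unfolding late_transfer_def by fastforce
    thus ?thesis using ltrans_imp_etrans ATau by blast
  qed
qed

lemma early_transfer_imp_late_transfer:
  assumes early: "early_transfer S R \<Psi> P Q"
  shows "late_transfer S R \<Psi> P Q"
  unfolding late_transfer_def
proof (intro allI impI)
  fix \<alpha> :: "'t act" and P' assume fresh_bn: "fresh_star (bn \<alpha>) \<Psi> \<and> fresh_star (bn \<alpha>) Q"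
  have early_step: "\<exists>Q'. etrans S \<Psi> Q \<beta> Q' \<and> (\<Psi>, P'', Q') \<in> R"
    if "etrans S \<Psi> P \<beta> P''" "bn \<beta> = {} \<or> \<beta> = \<alpha>" for \<beta> P''
    using early fresh_bn that unfolding early_transfer_def by fastforce
  show "case \<alpha> of
          AIn M x \<Rightarrow> ltrans S \<Psi> P \<alpha> P' \<longrightarrow>
            (\<forall>L. \<exists>Q'. ltrans S \<Psi> Q \<alpha> Q' \<and> (\<Psi>, subst_agent S P' x L, subst_agent S Q' x L) \<in> R)
        | _ \<Rightarrow> ltrans S \<Psi> P \<alpha> P' \<longrightarrow> (\<exists>Q'. ltrans S \<Psi> Q \<alpha> Q' \<and> (\<Psi>, P', Q') \<in> R)"
  proof (cases \<alpha>)
    case (AIn K x)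
    have "\<exists>Q'. ltrans S \<Psi> Q (AIn K x) Q' \<and> (\<Psi>, subst_agent S P' x L, subst_agent S Q' x L) \<in> R"
      if tr: "ltrans S \<Psi> P (AIn K x) P'" for L
    proof -
      obtain Q'' where Q'': "etrans S \<Psi> Q (AInE K L) Q''" "(\<Psi>, subst_agent S P' x L, Q'') \<in> R"
        using early_step ltrans_in_imp_etrans[OF tr] by fastforce
      moreover have "fresh x Q" using fresh_bn AIn by simp
      ultimately show ?thesis using etrans_inE_imp_ltrans by blast
    qed
    thus ?thesis using AIn by simp
  next
    case (AInE K N)
    thus ?thesis using ltrans_no_inE by (simp, blast)
  next
    case (AOut M as N)
    thus ?thesis using early_step ltrans_imp_etrans etrans_imp_ltrans by (simp, blast)
  next
    case ATau
    thus ?thesis using early_step ltrans_imp_etrans etrans_imp_ltrans by (simp, blast)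
  qed
qed

end

theorem lemma2:
  fixes S :: "('t::pt, 'c::pt, 'a::pt) psi"
    and R :: "('a \<times> ('t, 'c, 'a) agent \<times> ('t, 'c, 'a) agent) set"
  assumes "psi_calculus S"
    and "\<forall>(\<Psi>, P, Q) \<in> R. wf_agent P \<and> wf_agent Q"
  shows "late_bisim S R \<longleftrightarrow> early_bisim S R"
proof -
  interpret nominal_psi S using assms(1) by (rule psi_calculus_imp_nominal_psi)
  have "late_transfer S R \<Psi> P Q \<longleftrightarrow> early_transfer S R \<Psi> P Q" for \<Psi> P Q
    using late_transfer_imp_early_transfer early_transfer_imp_late_transfer by blast
  thus ?thesis unfolding late_bisim_iff_transfer early_bisim_iff_transfer by simp
qed

end
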